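(* Let $|\Psi_n\rangle\in\mathcal H^{\otimes n}$ be a permutation-invariant unit vector (i.e. $P_\pi|\Psi_n\rangle=|\Psi_n\rangle$ for all $\pi\in S_n$) and let $|\theta\rangle\in\mathcal H$ be a unit vector with $\langle\Psi_n|\theta^{\otimes n}\rangle\neq0$. Then for every $m\le n$ there is a unit vector $|\Psi_{n,m}\rangle\in\mathcal H^{\otimes n-m}$ such that $$|\Psi_{n,m}\rangle\langle\Psi_{n,m}|\le|\langle\Psi_n|\theta^{\otimes n}\rangle|^{-2}\,\mathrm{tr}_{1,\dots,m}(|\Psi_n\rangle\langle\Psi_n|),$$ and for every $r\le n-m$ there is an almost power state $|\Psi_{n,m,r}\rangle\in|\theta\rangle^{[\otimes,n-m,r]}$ (a unit vector) with $$\big\||\Psi_{n,m}\rangle\langle\Psi_{n,m}|-|\Psi_{n,m,r}\rangle\langle\Psi_{n,m,r}|\big\|_1\le2\sqrt2\,|\langle\Psi_n|\theta^{\otimes n}\rangle|^{-1}e^{-\frac{mr}{2n}}.$$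
   Context: $\mathcal H$ is a finite-dimensional Hilbert space; $P_\pi$ ($\pi\in S_n$) permutes the tensor factors of $\mathcal H^{\otimes n}$; $\mathrm{Sym}(\mathcal H^{\otimes n})$ is the symmetric subspace (vectors invariant under all $P_\pi$); $\mathrm{tr}_{1,\dots,m}$ is the partial trace over the first $m$ tensor factors. For a unit vector $|\theta\rangle\in\mathcal H$ and $0\le r\le n$, let $\mathcal V(\mathcal H^{\otimes n},|\theta\rangle^{\otimes n-r})=\{P_\pi(|\theta\rangle^{\otimes n-r}\otimes|\psi_r\rangle):\pi\in S_n,\ |\psi_r\rangle\in\mathcal H^{\otimes r}\}$, and define the set of almost power states $|\theta\rangle^{[\otimes,n,r]}=\mathrm{Sym}(\mathcal H^{\otimes n})\cap\mathrm{span}\,\mathcal V(\mathcal H^{\otimes n},|\theta\rangle^{\otimes n-r})$. *)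

theory Defs
  imports "HOL-Analysis.Analysis"
begin

text \<open>
  Model: the finite-dimensional Hilbert space H is the coordinate space with
  orthonormal basis indexed by a finite type 'a, i.e. vectors are functions
  'a \<Rightarrow> complex.  A vector of H^{\<otimes>n} is a function on lists of basis
  labels which vanishes off lists of length n (the basis of H^{\<otimes>n} is the
  set of product basis vectors |x1 ... xn>).  Operators on H^{\<otimes>n} are
  kernels 'a list \<Rightarrow> 'a list \<Rightarrow> complex (matrix entries in the product basis).
\<close>

definition lists_n :: "nat \<Rightarrow> 'a list set" where
  "lists_n n = {xs. length xs = n}"

definition tvec :: "nat \<Rightarrow> ('a list \<Rightarrow> complex) \<Rightarrow> bool" where
  "tvec n \<psi> \<longleftrightarrow> (\<forall>xs. length xs \<noteq> n \<longrightarrow> \<psi> xs = 0)"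

definition tinner :: "nat \<Rightarrow> ('a list \<Rightarrow> complex) \<Rightarrow> ('a list \<Rightarrow> complex) \<Rightarrow> complex" where
  "tinner n \<phi> \<psi> = (\<Sum>xs\<in>lists_n n. cnj (\<phi> xs) * \<psi> xs)"

definition unit_tvec :: "nat \<Rightarrow> ('a list \<Rightarrow> complex) \<Rightarrow> bool" where
  "unit_tvec n \<psi> \<longleftrightarrow> tvec n \<psi> \<and> tinner n \<psi> \<psi> = 1"

definition unit_vec :: "('a::finite \<Rightarrow> complex) \<Rightarrow> bool" where
  "unit_vec \<theta> \<longleftrightarrow> (\<Sum>x\<in>UNIV. cnj (\<theta> x) * \<theta> x) = 1"

definition perm_act :: "nat \<Rightarrow> (nat \<Rightarrow> nat) \<Rightarrow> ('a list \<Rightarrow> complex) \<Rightarrow> ('a list \<Rightarrow> complex)" where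
  "perm_act n \<pi> \<psi> = (\<lambda>xs. if length xs = n then \<psi> (map (\<lambda>i. xs ! \<pi> i) [0..<n]) else 0)"

definition sym_tvec :: "nat \<Rightarrow> ('a list \<Rightarrow> complex) \<Rightarrow> bool" where
  "sym_tvec n \<psi> \<longleftrightarrow> tvec n \<psi> \<and> (\<forall>\<pi>. \<pi> permutes {..<n} \<longrightarrow> perm_act n \<pi> \<psi> = \<psi>)"

definition tpow :: "('a \<Rightarrow> complex) \<Rightarrow> nat \<Rightarrow> ('a list \<Rightarrow> complex)" where
  "tpow \<theta> n = (\<lambda>xs. if length xs = n then prod_list (map \<theta> xs) else 0)"

definition tens :: "nat \<Rightarrow> ('a list \<Rightarrow> complex) \<Rightarrow> ('a list \<Rightarrow> complex) \<Rightarrow> ('a list \<Rightarrow> complex)" where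
  "tens k \<phi> \<psi> = (\<lambda>xs. \<phi> (take k xs) * \<psi> (drop k xs))"

definition lin_span :: "('a list \<Rightarrow> complex) set \<Rightarrow> ('a list \<Rightarrow> complex) set" where
  "lin_span S = {v. \<exists>F c. finite F \<and> F \<subseteq> S \<and> v = (\<lambda>xs. \<Sum>w\<in>F. c w * w xs)}"

definition Vset :: "('a \<Rightarrow> complex) \<Rightarrow> nat \<Rightarrow> nat \<Rightarrow> ('a list \<Rightarrow> complex) set" where
  "Vset \<theta> n r = {perm_act n \<pi> (tens (n - r) (tpow \<theta> (n - r)) \<psi>) | \<pi> \<psi>.
                   \<pi> permutes {..<n} \<and> tvec r \<psi>}"

definition almost_power :: "('a \<Rightarrow> complex) \<Rightarrow> nat \<Rightarrow> nat \<Rightarrow> ('a list \<Rightarrow> complex) set" where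
  "almost_power \<theta> n r = {\<phi>. sym_tvec n \<phi>} \<inter> lin_span (Vset \<theta> n r)"

definition proj :: "('a list \<Rightarrow> complex) \<Rightarrow> ('a list \<Rightarrow> complex) \<Rightarrow> ('a list \<Rightarrow> 'a list \<Rightarrow> complex)" where
  "proj \<phi> \<psi> = (\<lambda>xs ys. \<phi> xs * cnj (\<psi> ys))"

definition ptrace :: "nat \<Rightarrow> ('a list \<Rightarrow> 'a list \<Rightarrow> complex) \<Rightarrow> ('a list \<Rightarrow> 'a list \<Rightarrow> complex)" where
  "ptrace m \<rho> = (\<lambda>ys zs. \<Sum>xs\<in>lists_n m. \<rho> (xs @ ys) (xs @ zs))"

definition op_supp :: "nat \<Rightarrow> ('a list \<Rightarrow> 'a list \<Rightarrow> complex) \<Rightarrow> bool" where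
  "op_supp n A \<longleftrightarrow> (\<forall>xs ys. length xs \<noteq> n \<or> length ys \<noteq> n \<longrightarrow> A xs ys = 0)"

definition qform :: "nat \<Rightarrow> ('a list \<Rightarrow> 'a list \<Rightarrow> complex) \<Rightarrow> ('a list \<Rightarrow> complex) \<Rightarrow> complex" where
  "qform n A v = (\<Sum>xs\<in>lists_n n. \<Sum>ys\<in>lists_n n. cnj (v xs) * A xs ys * v ys)"

definition psd :: "nat \<Rightarrow> ('a list \<Rightarrow> 'a list \<Rightarrow> complex) \<Rightarrow> bool" where
  "psd n A \<longleftrightarrow> (\<forall>v. tvec n v \<longrightarrow> qform n A v \<in> \<real> \<and> 0 \<le> Re (qform n A v))"

definition op_le :: "nat \<Rightarrow> ('a list \<Rightarrow> 'a list \<Rightarrow> complex) \<Rightarrow> ('a list \<Rightarrow> 'a list \<Rightarrow> complex) \<Rightarrow> bool" where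
  "op_le n A B \<longleftrightarrow> psd n (\<lambda>xs ys. B xs ys - A xs ys)"

definition opmul :: "nat \<Rightarrow> ('a list \<Rightarrow> 'a list \<Rightarrow> complex) \<Rightarrow> ('a list \<Rightarrow> 'a list \<Rightarrow> complex) \<Rightarrow> ('a list \<Rightarrow> 'a list \<Rightarrow> complex)" where
  "opmul n A B = (\<lambda>xs zs. \<Sum>ys\<in>lists_n n. A xs ys * B ys zs)"

definition adj :: "('a list \<Rightarrow> 'a list \<Rightarrow> complex) \<Rightarrow> ('a list \<Rightarrow> 'a list \<Rightarrow> complex)" where
  "adj A = (\<lambda>xs ys. cnj (A ys xs))"

definition op_trace :: "nat \<Rightarrow> ('a list \<Rightarrow> 'a list \<Rightarrow> complex) \<Rightarrow> complex" where
  "op_trace n A = (\<Sum>xs\<in>lists_n n. A xs xs)"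

definition trace_norm :: "nat \<Rightarrow> ('a list \<Rightarrow> 'a list \<Rightarrow> complex) \<Rightarrow> real" where
  "trace_norm n X = Re (op_trace n (THE S. op_supp n S \<and> psd n S \<and>
        opmul n S S = opmul n (adj X) X))"

end

theory Submission
  imports Defs
begin

(* The state on the last n-m sites is the normalized contraction u = v/|v| of Psi with theta^m
   on the first m sites, v(ys) = sum_xs cnj(theta^m(xs)) Psi(xs @ ys).
   (1) Cauchy-Schwarz gives |v|^2 >= |c|^2 and |<y,v>|^2 <= <y| tr_{1..m} |Psi><Psi| |y>, hence
       |u><u| <= |c|^(-2) tr_{1..m} |Psi><Psi|.
   (2) A Householder reflection U maps theta to a basis vector e_b.  In the frame rotated by U,
       v is the symmetric vector U^n Psi with its first m labels fixed to b.  Truncating it to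
       lists with at most r labels different from b, normalizing and rotating back gives a
       symmetric vector in span V(theta^(n-m)): the almost power state Psi_r.
   (3) A double-counting argument using the symmetry bounds the discarded weight by exp(-mr/n),
       so |v|^2 (1 - |<u,Psi_r>|^2) <= exp(-mr/n).
   (4) For unit vectors ||uu* - ww*||_1 = 2 sqrt(1 - |<u,w>|^2): the Gram operator A of uu* - ww*
       satisfies A^2 = dA with d = 1 - |<u,w>|^2, so its unique positive root is A / sqrt d. *)

lemma finite_lists_n[simp]: "finite (lists_n n :: 'a::finite list set)"
  unfolding lists_n_def using finite_lists_length_eq[of "UNIV::'a set" n] by simp

lemma lists_n_0[simp]: "lists_n 0 = {[]}"
  unfolding lists_n_def by auto

lemma sum_lists_n_Suc:
  "(\<Sum>zs\<in>lists_n (Suc n). g zs) = (\<Sum>x\<in>(UNIV::'a::finite set). \<Sum>xs\<in>lists_n n. g (x#xs))"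
proof -
  have img: "lists_n (Suc n) = (\<lambda>(x,xs). x#xs) ` (UNIV \<times> lists_n n)"
    unfolding lists_n_def by (auto simp: image_def length_Suc_conv)
  have "inj_on (\<lambda>(x,xs). x#xs) (UNIV \<times> lists_n n)" by (auto simp: inj_on_def)
  then have "(\<Sum>zs\<in>lists_n (Suc n). g zs) = (\<Sum>p\<in>UNIV \<times> lists_n n. g ((\<lambda>(x,xs). x#xs) p))"
    unfolding img by (rule sum.reindex[unfolded o_def])
  also have "\<dots> = (\<Sum>x\<in>(UNIV::'a set). \<Sum>xs\<in>lists_n n. g (x#xs))"
    by (simp add: sum.cartesian_product split_def)
  finally show ?thesis .
qed

lemma sum_lists_n_append:
  "(\<Sum>zs\<in>lists_n (a+b). g zs) = (\<Sum>xs\<in>lists_n a. \<Sum>ys\<in>lists_n b. g (xs@ys :: 'a::finite list))"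
proof (induction a arbitrary: g)
  case 0 then show ?case by simp
next
  case (Suc a)
  have "(\<Sum>zs\<in>lists_n (Suc a + b). g zs) = (\<Sum>x\<in>(UNIV::'a set). \<Sum>xs\<in>lists_n (a+b). g (x#xs))"
    by (simp add: sum_lists_n_Suc)
  also have "\<dots> = (\<Sum>x\<in>(UNIV::'a set). \<Sum>xs\<in>lists_n a. \<Sum>ys\<in>lists_n b. g (x#xs@ys))"
    using Suc.IH[of "\<lambda>zs. g (_ # zs)"] by simp
  also have "\<dots> = (\<Sum>xs\<in>lists_n (Suc a). \<Sum>ys\<in>lists_n b. g (xs@ys))"
    by (simp add: sum_lists_n_Suc)
  finally show ?case .
qed

lemma sum_prod_lists:
  "(\<Sum>ys\<in>lists_n k. \<Prod>i<k. F i (ys!i)) = (\<Prod>i<k. \<Sum>y\<in>(UNIV::'a::finite set). (F i y :: complex))"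
proof (induction k arbitrary: F)
  case 0 then show ?case by simp
next
  case (Suc k)
  have "(\<Sum>ys\<in>lists_n (Suc k). \<Prod>i<Suc k. F i (ys!i))
      = (\<Sum>y\<in>(UNIV::'a set). \<Sum>ys\<in>lists_n k. F 0 y * (\<Prod>i<k. F (Suc i) (ys!i)))"
    by (simp del: prod.lessThan_Suc add: sum_lists_n_Suc prod.lessThan_Suc_shift)
  also have "\<dots> = (\<Sum>y\<in>(UNIV::'a set). F 0 y) * (\<Sum>ys\<in>lists_n k. (\<Prod>i<k. F (Suc i) (ys!i)))"
    by (simp add: sum_product)
  also have "\<dots> = (\<Prod>i<Suc k. \<Sum>y\<in>(UNIV::'a set). F i y)"
    using Suc.IH[of "\<lambda>i. F (Suc i)"] by (simp del: prod.lessThan_Suc add: prod.lessThan_Suc_shift)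
  finally show ?case .
qed

lemma prod_list_map_nth: "prod_list (map h xs) = (\<Prod>i<length xs. h (xs!i))"
  by (induction xs) (simp_all del: prod.lessThan_Suc add: prod.lessThan_Suc_shift)

lemma sum_delta_mult:
  fixes a :: complex and f :: "'a::finite \<Rightarrow> complex"
  shows "(\<Sum>y\<in>UNIV. (if y = b then a else 0) * f y) = a * f b"
    and "(\<Sum>y\<in>UNIV. f y * (if y = b then a else 0)) = f b * a"
  by (simp_all add: if_distrib[of "\<lambda>z. z * _"] if_distrib[of "\<lambda>z. _ * z"] cong: if_cong)

lemma cnj_mult_self: "cnj z * z = complex_of_real ((cmod z)^2)"
  by (subst complex_norm_square) (simp add: mult.commute)

lemma tinner_self: "tinner k f f = complex_of_real (\<Sum>xs\<in>lists_n k. (cmod (f xs))^2)"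
  unfolding tinner_def by (simp add: cnj_mult_self)

lemma tinner_self_Re: "Re (tinner k f f) = (\<Sum>xs\<in>lists_n k. (cmod (f xs))^2)"
  by (simp add: tinner_self)

lemma tinner_self_ge0: "0 \<le> Re (tinner k f f)"
  by (simp add: tinner_self_Re sum_nonneg)

lemma tinner_cnj: "tinner k g f = cnj (tinner k f g)"
  unfolding tinner_def by (simp add: mult.commute)

lemma tinner_div:
  "tinner k (\<lambda>ys. f ys / complex_of_real a) (\<lambda>ys. g ys / complex_of_real a') = tinner k f g / complex_of_real (a * a')"
  unfolding tinner_def by (simp add: sum_divide_distrib)

lemma tinner_CS:
  fixes f g :: "'a::finite list \<Rightarrow> complex"
  shows "(cmod (tinner k f g))^2 \<le> Re (tinner k f f) * Re (tinner k g g)"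
proof -
  have "cmod (tinner k f g) \<le> (\<Sum>xs\<in>lists_n k. cmod (f xs) * cmod (g xs))"
    unfolding tinner_def by (rule order_trans[OF norm_sum]) (simp add: norm_mult)
  then have "(cmod (tinner k f g))^2 \<le> (\<Sum>xs\<in>lists_n k. cmod (f xs) * cmod (g xs))^2"
    by (simp add: power_mono)
  also have "\<dots> \<le> (\<Sum>xs\<in>lists_n k. (cmod (f xs))^2) * (\<Sum>xs\<in>lists_n k. (cmod (g xs))^2)"
    by (rule Cauchy_Schwarz_ineq_sum)
  finally show ?thesis by (simp add: tinner_self_Re)
qed

lemma tinner_self_eq_0:
  fixes z :: "'a::finite list \<Rightarrow> complex"
  assumes "tvec k z" "tinner k z z = 0"
  shows "z = (\<lambda>_. 0)"
proof
  fix xs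
  show "z xs = 0"
  proof (cases "xs \<in> lists_n k")
    case True
    have "(\<Sum>xs\<in>lists_n k. (cmod (z xs))^2) = 0"
      using assms(2) unfolding tinner_self by (simp only: of_real_eq_0_iff)
    then have "(cmod (z xs))^2 = 0"
      using True by (subst (asm) sum_nonneg_eq_0_iff) auto
    then show ?thesis by simp
  next
    case False then show ?thesis using assms(1) by (simp add: tvec_def lists_n_def)
  qed
qed

definition normalized :: "nat \<Rightarrow> ('a list \<Rightarrow> complex) \<Rightarrow> ('a list \<Rightarrow> complex)" where
  "normalized k v = (\<lambda>ys. v ys / complex_of_real (sqrt (Re (tinner k v v))))"

lemma unit_normalized:
  assumes "tvec k v" "0 < Re (tinner k v v)"
  shows "unit_tvec k (normalized k v)"
proof -
  define N where "N = Re (tinner k v v)"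
  have vv: "tinner k v v = complex_of_real N" by (simp add: N_def tinner_self)
  have "sqrt N * sqrt N = N" using assms(2) by (simp add: N_def)
  then have "tinner k (normalized k v) (normalized k v) = 1"
    unfolding normalized_def tinner_div N_def[symmetric] vv using assms(2) by (simp add: N_def)
  with assms(1) show ?thesis by (simp add: unit_tvec_def tvec_def normalized_def)
qed

section \<open>Operators, positive square roots and the trace norm\<close>

definition app :: "nat \<Rightarrow> ('a list \<Rightarrow> 'a list \<Rightarrow> complex) \<Rightarrow> ('a list \<Rightarrow> complex) \<Rightarrow> ('a list \<Rightarrow> complex)" where
  "app k A f = (\<lambda>xs. \<Sum>ys\<in>lists_n k. A xs ys * f ys)"

lemma app_app: "app k A (app k B f) = app k (opmul k A B) (f :: 'a::finite list \<Rightarrow> complex)"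
proof (rule ext)
  fix xs
  have "(\<Sum>ys\<in>lists_n k. A xs ys * (\<Sum>zs\<in>lists_n k. B ys zs * f zs))
      = (\<Sum>ys\<in>lists_n k. \<Sum>zs\<in>lists_n k. A xs ys * B ys zs * f zs)"
    by (simp add: sum_distrib_left mult.assoc)
  also have "\<dots> = (\<Sum>zs\<in>lists_n k. \<Sum>ys\<in>lists_n k. A xs ys * B ys zs * f zs)"
    by (rule sum.swap)
  also have "\<dots> = (\<Sum>zs\<in>lists_n k. (\<Sum>ys\<in>lists_n k. A xs ys * B ys zs) * f zs)"
    by (simp add: sum_distrib_right)
  finally show "app k A (app k B f) xs = app k (opmul k A B) f xs"
    unfolding app_def opmul_def .
qed

lemma app_tvec: "op_supp k S \<Longrightarrow> tvec k (app k S f)"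
  unfolding op_supp_def tvec_def app_def by auto

lemma qform_app: "qform k S z = tinner k z (app k S z)"
  unfolding qform_def tinner_def app_def by (simp add: sum_distrib_left mult.assoc)

lemma app_lin: "app k S (\<lambda>xs. f xs + c * g xs) = (\<lambda>xs. app k S f xs + c * app k S g xs)"
  unfolding app_def by (rule ext) (simp add: algebra_simps sum.distrib sum_distrib_left)

lemma app_diff: "app k S (\<lambda>xs. f xs - g xs) = (\<lambda>xs. app k S f xs - app k S g xs)"
  unfolding app_def by (rule ext) (simp add: algebra_simps sum_subtractf)

lemma app_scale: "app k S (\<lambda>xs. c * f xs) = (\<lambda>xs. c * app k S f xs)"
  unfolding app_def by (rule ext) (simp add: algebra_simps sum_distrib_left)

lemma app_kscale: "app k (\<lambda>xs ys. c * B xs ys) f = (\<lambda>xs. c * app k B f xs)"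
  unfolding app_def by (simp add: sum_distrib_left mult.assoc)

lemma app_delta:
  fixes S :: "'a::finite list \<Rightarrow> 'a list \<Rightarrow> complex"
  assumes "ys0 \<in> lists_n k"
  shows "app k S (\<lambda>ys. if ys = ys0 then 1 else 0) xs = S xs ys0"
proof -
  have "(\<Sum>ys\<in>lists_n k. S xs ys * (if ys = ys0 then 1 else 0)) = (\<Sum>ys\<in>lists_n k. if ys = ys0 then S xs ys0 else 0)"
    by (rule sum.cong) auto
  then show ?thesis unfolding app_def using assms by simp
qed

lemma psd_root_eigenvector:
  fixes S :: "'a::finite list \<Rightarrow> 'a list \<Rightarrow> complex"
  assumes psd: "psd k S" and supp: "op_supp k S" and sq: "opmul k S S = A"
    and eig: "app k A z = (\<lambda>xs. complex_of_real d * z xs)" and d: "d > 0" and tz: "tvec k z"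
  shows "app k S z = (\<lambda>xs. complex_of_real (sqrt d) * z xs)"
proof -
  define s where "s = sqrt d"
  have s: "s > 0" "complex_of_real d = complex_of_real s * complex_of_real s"
    using d by (auto simp: s_def simp flip: of_real_mult)
  text \<open>q = (S - s) z is an eigenvector of S with eigenvalue -s, which positivity forbids.\<close>
  define q where "q = (\<lambda>xs. app k S z xs - complex_of_real s * z xs)"
  have tq: "tvec k q" using app_tvec[OF supp, of z] tz by (simp add: q_def tvec_def)
  have "app k S q = (\<lambda>xs. complex_of_real d * z xs - complex_of_real s * app k S z xs)"
    unfolding q_def app_diff app_scale by (simp add: app_app sq eig)
  also have "\<dots> = (\<lambda>xs. - complex_of_real s * q xs)"
    unfolding q_def s(2) by (simp add: algebra_simps)
  finally have "qform k S q = - complex_of_real s * tinner k q q"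
    unfolding qform_app tinner_def by (simp add: sum_distrib_left algebra_simps)
  moreover have "0 \<le> Re (qform k S q)" using psd tq unfolding psd_def by blast
  ultimately have "Re (tinner k q q) \<le> 0" using s(1) by (simp add: mult_le_0_iff)
  then have "tinner k q q = 0" using tinner_self_ge0[of k q] by (simp add: tinner_self)
  then have "q = (\<lambda>_. 0)" using tinner_self_eq_0 tq by blast
  then show ?thesis unfolding s_def q_def by (metis right_minus_eq)
qed

lemma psd_root_kernel:
  fixes S :: "'a::finite list \<Rightarrow> 'a list \<Rightarrow> complex"
  assumes psd: "psd k S" and supp: "op_supp k S" and sq: "opmul k S S = A"
    and ker: "app k A z = (\<lambda>_. 0)" and tz: "tvec k z"
  shows "app k S z = (\<lambda>_. 0)"
proof -
  define p where "p = app k S z"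
  have tp: "tvec k p" using app_tvec[OF supp] by (simp add: p_def)
  have Sp: "app k S p = (\<lambda>_. 0)" unfolding p_def app_app sq ker ..
  define P where "P = Re (tinner k p p)"
  define \<alpha> where "\<alpha> = Re (tinner k z p)"
  text \<open>The quadratic form of S along z + t p is affine in t and nonnegative, so P = 0.\<close>
  have affine: "0 \<le> \<alpha> + t * P" for t :: real
  proof -
    define y where "y = (\<lambda>xs. z xs + complex_of_real t * p xs)"
    have ty: "tvec k y" using tz tp by (simp add: y_def tvec_def)
    have Sy: "app k S y = p" unfolding y_def app_lin Sp by (simp add: p_def)
    have "qform k S y = tinner k z p + complex_of_real t * tinner k p p"
      unfolding qform_app Sy unfolding y_def tinner_def
      by (simp add: algebra_simps sum.distrib sum_distrib_left)
    then have "Re (qform k S y) = \<alpha> + t * P" by (simp add: \<alpha>_def P_def)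
    moreover have "0 \<le> Re (qform k S y)" using psd ty unfolding psd_def by blast
    ultimately show ?thesis by simp
  qed
  have "P = 0"
  proof (rule ccontr)
    assume "P \<noteq> 0"
    then have "P > 0" using tinner_self_ge0[of k p] by (simp add: P_def)
    then show False using affine[of "-(\<alpha>+1)/P"] by simp
  qed
  then have "tinner k p p = 0" by (simp add: P_def tinner_self)
  then show ?thesis using tinner_self_eq_0 tp p_def by blast
qed

lemma psd_root_unique:
  fixes A S :: "'a::finite list \<Rightarrow> 'a list \<Rightarrow> complex"
  assumes Asupp: "op_supp k A" and AA: "opmul k A A = (\<lambda>xs zs. complex_of_real d * A xs zs)"
    and d0: "0 \<le> d" and A0: "d = 0 \<Longrightarrow> A = (\<lambda>_ _. 0)"
    and Ssupp: "op_supp k S" and Spsd: "psd k S" and Ssq: "opmul k S S = A"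
  shows "S = (\<lambda>xs ys. A xs ys / complex_of_real (sqrt d))"
proof (intro ext)
  fix xs ys0
  show "S xs ys0 = A xs ys0 / complex_of_real (sqrt d)"
  proof (cases "xs \<in> lists_n k \<and> ys0 \<in> lists_n k")
    case False
    then show ?thesis using Ssupp Asupp unfolding op_supp_def lists_n_def by auto
  next
    case True
    define e where "e = (\<lambda>ys. if ys = ys0 then (1::complex) else 0)"
    have te: "tvec k e" using True by (auto simp: e_def tvec_def lists_n_def)
    have Se: "app k S e xs = S xs ys0" and Ae: "\<And>xs'. app k A e xs' = A xs' ys0"
      unfolding e_def using True by (simp_all add: app_delta)
    show ?thesis
    proof (cases "d = 0")
      case True
      have "app k A e = (\<lambda>_. 0)" using A0[OF True] by (simp add: app_def)
      then have "app k S e = (\<lambda>_. 0)" by (rule psd_root_kernel[OF Spsd Ssupp Ssq _ te])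
      then show ?thesis using Se A0[OF True] by simp
    next
      case False
      then have dpos: "d > 0" using d0 by simp
      text \<open>Split e into a d-eigenvector z1 = A e / d of A and a kernel vector z2.\<close>
      define c where "c = inverse (complex_of_real d)"
      define z1 where "z1 = (\<lambda>xs. c * app k A e xs)"
      define z2 where "z2 = (\<lambda>xs. e xs - z1 xs)"
      have tz1: "tvec k z1" using app_tvec[OF Asupp] by (simp add: z1_def tvec_def)
      have tz2: "tvec k z2" using tz1 te by (simp add: z2_def tvec_def)
      have cd: "c * complex_of_real d = 1" using False by (simp add: c_def)
      have Az1: "app k A z1 = (\<lambda>xs. complex_of_real d * z1 xs)"
        unfolding z1_def app_scale app_app AA app_kscale by (intro ext) (simp add: algebra_simps)
      have Az2: "app k A z2 = (\<lambda>_. 0)"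
        unfolding z2_def app_diff Az1 unfolding z1_def using cd by (intro ext) (simp add: algebra_simps)
      have Sz1: "app k S z1 = (\<lambda>xs. complex_of_real (sqrt d) * z1 xs)"
        by (rule psd_root_eigenvector[OF Spsd Ssupp Ssq Az1 dpos tz1])
      have Sz2: "app k S z2 = (\<lambda>_. 0)" by (rule psd_root_kernel[OF Spsd Ssupp Ssq Az2 tz2])
      have "e = (\<lambda>xs. z1 xs + 1 * z2 xs)" by (simp add: z2_def)
      then have "app k S e = (\<lambda>xs. app k S z1 xs + 1 * app k S z2 xs)" by (simp only: app_lin)
      then have "S xs ys0 = complex_of_real (sqrt d) * (c * A xs ys0)"
        using Se Sz1 Sz2 by (simp add: z1_def Ae)
      also have "\<dots> = A xs ys0 / complex_of_real (sqrt d)"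
        using dpos by (simp add: c_def field_simps real_sqrt_mult_self flip: of_real_mult)
      finally show ?thesis .
    qed
  qed
qed

lemma app_adj: "tinner k y (app k (adj X) g) = tinner k (app k X y) (g :: 'a::finite list \<Rightarrow> complex)"
proof -
  have "tinner k y (app k (adj X) g) = (\<Sum>xs\<in>lists_n k. \<Sum>ys\<in>lists_n k. cnj (y xs) * cnj (X ys xs) * g ys)"
    unfolding tinner_def app_def adj_def by (simp add: sum_distrib_left mult.assoc)
  also have "\<dots> = (\<Sum>ys\<in>lists_n k. \<Sum>xs\<in>lists_n k. cnj (y xs) * cnj (X ys xs) * g ys)"
    by (rule sum.swap)
  also have "\<dots> = (\<Sum>ys\<in>lists_n k. (\<Sum>xs\<in>lists_n k. cnj (y xs) * cnj (X ys xs)) * g ys)"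
    by (simp add: sum_distrib_right)
  also have "\<dots> = tinner k (app k X y) g"
    unfolding tinner_def app_def by (simp add: mult.commute)
  finally show ?thesis .
qed

lemma psd_adj_mult: "psd k (opmul k (adj X) (X :: 'a::finite list \<Rightarrow> 'a list \<Rightarrow> complex))"
  unfolding psd_def qform_app app_app[symmetric] app_adj by (simp add: tinner_self sum_nonneg)

lemma qform_scale: "qform k (\<lambda>xs ys. A xs ys / c) y = qform k A y / c"
  unfolding qform_def by (simp add: sum_divide_distrib)

text \<open>Trace norm of X when the Gram operator A = X*X satisfies A^2 = d A: then |X| = A / sqrt d.\<close>
lemma trace_norm_gram_idempotent:
  fixes X A :: "'a::finite list \<Rightarrow> 'a list \<Rightarrow> complex"
  assumes A: "A = opmul k (adj X) X" and Asupp: "op_supp k A"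
    and AA: "opmul k A A = (\<lambda>xs zs. complex_of_real d * A xs zs)"
    and d0: "0 \<le> d" and A0: "d = 0 \<Longrightarrow> A = (\<lambda>_ _. 0)"
  shows "trace_norm k X = Re (op_trace k A) / sqrt d"
proof -
  define S0 where "S0 = (\<lambda>xs ys. A xs ys / complex_of_real (sqrt d))"
  have S0supp: "op_supp k S0" using Asupp by (simp add: op_supp_def S0_def)
  have S0psd: "psd k S0"
    using psd_adj_mult[of k X] unfolding S0_def psd_def qform_scale A[symmetric]
    by (auto simp: Re_divide_of_real d0 intro!: divide_nonneg_nonneg)
  have S0sq: "opmul k S0 S0 = A"
  proof (cases "d = 0")
    case True then show ?thesis using A0 by (simp add: S0_def opmul_def)
  next
    case False
    have "opmul k S0 S0 = (\<lambda>xs zs. opmul k A A xs zs / (complex_of_real (sqrt d) * complex_of_real (sqrt d)))"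
      unfolding S0_def opmul_def by (intro ext) (simp add: sum_divide_distrib)
    also have "\<dots> = A" unfolding AA using False d0 by (intro ext) (simp flip: of_real_mult)
    finally show ?thesis .
  qed
  have "(THE S. op_supp k S \<and> psd k S \<and> opmul k S S = opmul k (adj X) X) = S0"
    unfolding A[symmetric] S0_def
    using S0supp S0psd S0sq psd_root_unique[OF Asupp AA d0 A0] unfolding S0_def
    by (intro the_equality) blast+
  then have "trace_norm k X = Re (op_trace k S0)" by (simp add: trace_norm_def)
  also have "\<dots> = Re (op_trace k A) / sqrt d"
    unfolding op_trace_def S0_def by (simp add: sum_divide_distrib Re_divide_of_real)
  finally show ?thesis .
qed

lemma gram_zero_of_trace_zero:
  fixes X :: "'a::finite list \<Rightarrow> 'a list \<Rightarrow> complex"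
  assumes supp: "op_supp k X" and tr: "op_trace k (opmul k (adj X) X) = 0"
  shows "opmul k (adj X) X = (\<lambda>_ _. 0)"
proof -
  have "op_trace k (opmul k (adj X) X) = complex_of_real (\<Sum>xs\<in>lists_n k. \<Sum>ys\<in>lists_n k. (cmod (X ys xs))^2)"
    unfolding op_trace_def opmul_def adj_def by (simp add: cnj_mult_self)
  then have "(\<Sum>xs\<in>lists_n k. \<Sum>ys\<in>lists_n k. (cmod (X ys xs))^2) = 0"
    using tr by (metis of_real_eq_0_iff)
  then have "(\<Sum>ys\<in>lists_n k. (cmod (X ys xs))^2) = 0" if "xs \<in> lists_n k" for xs
    using that by (subst (asm) sum_nonneg_eq_0_iff) (auto intro: sum_nonneg)
  then have X0: "X ys xs = 0" if "xs \<in> lists_n k" "ys \<in> lists_n k" for xs ys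
    using that by (subst (asm) sum_nonneg_eq_0_iff) auto
  have "X ys xs = 0" if "ys \<in> lists_n k" for xs ys
    using X0[OF _ that, of xs] supp by (auto simp: op_supp_def lists_n_def)
  then show ?thesis unfolding opmul_def adj_def by (intro ext) simp
qed

lemma gram_pure_diff:
  fixes u w :: "'a::finite list \<Rightarrow> complex"
  assumes uu: "tinner k u u = 1" and ww: "tinner k w w = 1"
  defines "X \<equiv> \<lambda>xs ys. proj u u xs ys - proj w w xs ys" and "a \<equiv> tinner k u w"
  shows "opmul k (adj X) X xs zs
    = u xs * cnj (u zs) - a * (u xs * cnj (w zs)) - cnj a * (w xs * cnj (u zs)) + w xs * cnj (w zs)"
proof -
  have wu: "tinner k w u = cnj a" using tinner_cnj a_def by metis
  have "opmul k (adj X) X xs zs = (\<Sum>ys\<in>lists_n k. u xs * cnj (u zs) * (cnj (u ys) * u ys)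
        - u xs * cnj (w zs) * (cnj (u ys) * w ys)
        - w xs * cnj (u zs) * (cnj (w ys) * u ys) + w xs * cnj (w zs) * (cnj (w ys) * w ys))"
    unfolding opmul_def adj_def X_def proj_def by (intro sum.cong refl) (simp add: algebra_simps)
  also have "\<dots> = u xs * cnj (u zs) * tinner k u u - u xs * cnj (w zs) * tinner k u w
        - w xs * cnj (u zs) * tinner k w u + w xs * cnj (w zs) * tinner k w w"
    unfolding tinner_def by (simp add: sum.distrib sum_subtractf sum_distrib_left)
  finally show ?thesis using uu ww wu by (simp add: a_def algebra_simps)
qed

text \<open>On span{u, w} the Gram operator A of uu* - ww* acts as d = 1 - |<u,w>|^2 times the identity;
  hence A^2 = d A and tr A = 2 d.\<close>
lemma gram_pure_diff_square:
  fixes u w :: "'a::finite list \<Rightarrow> complex"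
  assumes uu: "tinner k u u = 1" and ww: "tinner k w w = 1"
  defines "A \<equiv> opmul k (adj (\<lambda>xs ys. proj u u xs ys - proj w w xs ys)) (\<lambda>xs ys. proj u u xs ys - proj w w xs ys)"
    and "d \<equiv> 1 - (cmod (tinner k u w))^2"
  shows "opmul k A A = (\<lambda>xs zs. complex_of_real d * A xs zs)" and "op_trace k A = complex_of_real (2 * d)"
proof -
  define a where "a = tinner k u w"
  have wu: "tinner k w u = cnj a" using tinner_cnj a_def by metis
  have dd: "complex_of_real d = 1 - a * cnj a"
    by (simp only: d_def a_def of_real_diff of_real_1 complex_norm_square)
  have Aform: "A xs zs = u xs * cnj (u zs) - a * (u xs * cnj (w zs)) - cnj a * (w xs * cnj (u zs)) + w xs * cnj (w zs)" for xs zs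
    unfolding A_def a_def by (rule gram_pure_diff[OF uu ww])
  have Au: "app k A u = (\<lambda>xs. complex_of_real d * u xs)"
  proof (rule ext)
    fix xs
    have "app k A u xs = u xs * tinner k u u - a * (u xs * tinner k w u) - cnj a * (w xs * tinner k u u) + w xs * tinner k w u"
      unfolding app_def Aform tinner_def
      by (simp add: algebra_simps sum.distrib sum_subtractf sum_distrib_left)
    then show "app k A u xs = complex_of_real d * u xs" using uu wu by (simp add: dd algebra_simps)
  qed
  have Aw: "app k A w = (\<lambda>xs. complex_of_real d * w xs)"
  proof (rule ext)
    fix xs
    have "app k A w xs = u xs * tinner k u w - a * (u xs * tinner k w w) - cnj a * (w xs * tinner k u w) + w xs * tinner k w w"
      unfolding app_def Aform tinner_def
      by (simp add: algebra_simps sum.distrib sum_subtractf sum_distrib_left)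
    then show "app k A w xs = complex_of_real d * w xs" using ww by (simp add: dd a_def algebra_simps)
  qed
  show "opmul k A A = (\<lambda>xs zs. complex_of_real d * A xs zs)"
  proof (intro ext)
    fix xs zs
    have "opmul k A A xs zs = app k A u xs * cnj (u zs) - a * (app k A u xs * cnj (w zs))
        - cnj a * (app k A w xs * cnj (u zs)) + app k A w xs * cnj (w zs)"
      unfolding opmul_def app_def Aform[of _ zs]
      by (simp add: algebra_simps sum.distrib sum_subtractf sum_distrib_left sum_distrib_right)
    also have "\<dots> = complex_of_real d * A xs zs"
      unfolding Au Aw Aform by (simp add: algebra_simps)
    finally show "opmul k A A xs zs = complex_of_real d * A xs zs" .
  qed
  have "op_trace k A = tinner k u u - a * tinner k w u - cnj a * tinner k u w + tinner k w w"
    unfolding op_trace_def Aform tinner_def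
    by (simp add: algebra_simps sum.distrib sum_subtractf sum_distrib_left)
  then show "op_trace k A = complex_of_real (2 * d)" using uu ww wu by (simp add: dd a_def algebra_simps)
qed

lemma trace_norm_pure:
  fixes u w :: "'a::finite list \<Rightarrow> complex"
  assumes u: "unit_tvec k u" and w: "unit_tvec k w"
  shows "trace_norm k (\<lambda>xs ys. proj u u xs ys - proj w w xs ys) = 2 * sqrt (1 - (cmod (tinner k u w))^2)"
proof -
  define d where "d = 1 - (cmod (tinner k u w))^2"
  define X where "X = (\<lambda>xs ys. proj u u xs ys - proj w w xs ys)"
  define A where "A = opmul k (adj X) X"
  have tu: "tvec k u" and uu: "tinner k u u = 1" using u by (auto simp: unit_tvec_def)
  have tw: "tvec k w" and ww: "tinner k w w = 1" using w by (auto simp: unit_tvec_def)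
  have "(cmod (tinner k u w))^2 \<le> Re (tinner k u u) * Re (tinner k w w)" by (rule tinner_CS)
  then have d0: "0 \<le> d" using uu ww by (simp add: d_def)
  note AA = gram_pure_diff_square(1)[OF uu ww, folded X_def A_def d_def]
  note trA = gram_pure_diff_square(2)[OF uu ww, folded X_def A_def d_def]
  have Xsupp: "op_supp k X" using tu tw by (auto simp: op_supp_def X_def proj_def tvec_def)
  have Asupp: "op_supp k A" using Xsupp by (auto simp: op_supp_def A_def opmul_def adj_def)
  have A0: "A = (\<lambda>_ _. 0)" if "d = 0"
    unfolding A_def using Xsupp trA that by (intro gram_zero_of_trace_zero) (simp_all add: A_def)
  have "trace_norm k X = Re (op_trace k A) / sqrt d"
    by (rule trace_norm_gram_idempotent[OF A_def Asupp AA d0 A0])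
  also have "\<dots> = 2 * (d / sqrt d)" unfolding trA by simp
  also have "\<dots> = 2 * sqrt d" using d0 by (simp add: real_div_sqrt)
  finally show ?thesis by (simp add: X_def d_def)
qed

section \<open>Tensor powers of single-site operators\<close>

definition kp :: "('a \<Rightarrow> 'a \<Rightarrow> complex) \<Rightarrow> 'a list \<Rightarrow> 'a list \<Rightarrow> complex" where
  "kp U xs ys = (\<Prod>i<length xs. U (xs!i) (ys!i))"

definition tpw :: "('a \<Rightarrow> 'a \<Rightarrow> complex) \<Rightarrow> nat \<Rightarrow> ('a list \<Rightarrow> complex) \<Rightarrow> ('a list \<Rightarrow> complex)" where
  "tpw U k f = (\<lambda>xs. if length xs = k then \<Sum>ys\<in>lists_n k. kp U xs ys * f ys else 0)"

definition mm :: "('a::finite \<Rightarrow> 'a \<Rightarrow> complex) \<Rightarrow> ('a \<Rightarrow> 'a \<Rightarrow> complex) \<Rightarrow> ('a \<Rightarrow> 'a \<Rightarrow> complex)" where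
  "mm V U = (\<lambda>x z. \<Sum>y\<in>UNIV. V x y * U y z)"

definition ust :: "('a \<Rightarrow> 'a \<Rightarrow> complex) \<Rightarrow> ('a \<Rightarrow> 'a \<Rightarrow> complex)" where
  "ust U = (\<lambda>x y. cnj (U y x))"

definition unitary :: "('a::finite \<Rightarrow> 'a \<Rightarrow> complex) \<Rightarrow> bool" where
  "unitary U \<longleftrightarrow> mm (ust U) U = (\<lambda>x z. if x = z then 1 else 0) \<and> mm U (ust U) = (\<lambda>x z. if x = z then 1 else 0)"

lemma unitary_ust: "unitary U \<Longrightarrow> unitary (ust U)"
  unfolding unitary_def by (simp add: ust_def)

lemma kp_Nil[simp]: "kp U [] ys = 1" by (simp add: kp_def)

lemma kp_Cons[simp]: "kp U (x#xs) (y#ys) = U x y * kp U xs ys"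
  unfolding kp_def by (simp del: prod.lessThan_Suc add: prod.lessThan_Suc_shift)

lemma kp_append:
  "length ps = length xs1 \<Longrightarrow> kp U (xs1@xs2) (ps@qs) = kp U xs1 ps * kp U xs2 qs"
proof (induction xs1 arbitrary: ps)
  case Nil then show ?case by simp
next
  case (Cons x xs1)
  then obtain p ps' where "ps = p # ps'" by (cases ps) auto
  with Cons show ?case by simp
qed

lemma tpw_tvec: "tvec k (tpw U k f)"
  by (simp add: tvec_def tpw_def)

lemma kp_mm:
  fixes U V :: "'a::finite \<Rightarrow> 'a \<Rightarrow> complex"
  assumes "length xs = k" "length zs = k"
  shows "(\<Sum>ys\<in>lists_n k. kp V xs ys * kp U ys zs) = kp (mm V U) xs zs"
proof -
  have "(\<Sum>ys\<in>lists_n k. kp V xs ys * kp U ys zs) = (\<Sum>ys\<in>lists_n k. \<Prod>i<k. V (xs!i) (ys!i) * U (ys!i) (zs!i))"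
    using assms by (intro sum.cong refl) (simp add: kp_def prod.distrib lists_n_def)
  also have "\<dots> = (\<Prod>i<k. \<Sum>y\<in>UNIV. V (xs!i) y * U y (zs!i))" by (rule sum_prod_lists)
  also have "\<dots> = kp (mm V U) xs zs" using assms by (simp add: kp_def mm_def)
  finally show ?thesis .
qed

lemma tpw_tpw:
  fixes U V :: "'a::finite \<Rightarrow> 'a \<Rightarrow> complex"
  shows "tpw V k (tpw U k f) = tpw (mm V U) k f"
proof (rule ext)
  fix xs
  show "tpw V k (tpw U k f) xs = tpw (mm V U) k f xs"
  proof (cases "length xs = k")
    case True
    have "tpw V k (tpw U k f) xs = (\<Sum>ys\<in>lists_n k. \<Sum>zs\<in>lists_n k. kp V xs ys * kp U ys zs * f zs)"
      using True by (auto simp: tpw_def lists_n_def sum_distrib_left mult.assoc intro!: sum.cong)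
    also have "\<dots> = (\<Sum>zs\<in>lists_n k. \<Sum>ys\<in>lists_n k. kp V xs ys * kp U ys zs * f zs)"
      by (rule sum.swap)
    also have "\<dots> = (\<Sum>zs\<in>lists_n k. kp (mm V U) xs zs * f zs)"
    proof (intro sum.cong refl)
      fix zs :: "'a list" assume "zs \<in> lists_n k"
      then have "length zs = k" by (simp add: lists_n_def)
      then show "(\<Sum>ys\<in>lists_n k. kp V xs ys * kp U ys zs * f zs) = kp (mm V U) xs zs * f zs"
        using kp_mm[OF True] by (simp add: sum_distrib_right[symmetric])
    qed
    finally show ?thesis using True by (simp add: tpw_def)
  qed (simp add: tpw_def)
qed

lemma kp_delta:
  assumes "length ys = length xs"
  shows "kp (\<lambda>x z. if x = z then 1 else 0) xs ys = (if xs = ys then 1 else 0)"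
proof (cases "xs = ys")
  case True then show ?thesis by (simp add: kp_def)
next
  case False
  then obtain i where i: "i < length xs" "xs!i \<noteq> ys!i" using assms by (metis nth_equalityI)
  have "(\<Prod>i<length xs. (\<lambda>x z. if x = z then (1::complex) else 0) (xs!i) (ys!i)) = 0"
    by (rule prod_zero) (use i in auto)
  then show ?thesis using False by (simp add: kp_def)
qed

lemma tpw_id:
  assumes "tvec k f"
  shows "tpw (\<lambda>x z. if x = z then 1 else 0) k f = (f :: 'a::finite list \<Rightarrow> complex)"
proof (rule ext)
  fix xs
  show "tpw (\<lambda>x z. if x = z then 1 else 0) k f xs = f xs"
  proof (cases "length xs = k")
    case True
    have "(\<Sum>ys\<in>lists_n k. kp (\<lambda>x z. if x = z then 1 else 0) xs ys * f ys) = (\<Sum>ys\<in>lists_n k. if ys = xs then f xs else 0)"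
      using True by (intro sum.cong refl) (auto simp: kp_delta lists_n_def)
    also have "\<dots> = f xs"
      using True by (subst sum.delta[OF finite_lists_n]) (simp add: lists_n_def)
    finally show ?thesis using True by (simp add: tpw_def)
  qed (use assms in \<open>simp add: tpw_def tvec_def\<close>)
qed

lemma tpw_inv:
  fixes U :: "'a::finite \<Rightarrow> 'a \<Rightarrow> complex"
  assumes "unitary U" "tvec k f"
  shows "tpw (ust U) k (tpw U k f) = f" "tpw U k (tpw (ust U) k f) = f"
  using assms by (simp_all add: tpw_tpw unitary_def tpw_id)

lemma cnj_kp: "length ys = length xs \<Longrightarrow> cnj (kp U xs ys) = kp (ust U) ys xs"
  by (simp add: kp_def ust_def)

lemma tpw_adj:
  fixes U :: "'a::finite \<Rightarrow> 'a \<Rightarrow> complex"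
  shows "tinner k (tpw U k f) g = tinner k f (tpw (ust U) k g)"
proof -
  have "tinner k (tpw U k f) g = (\<Sum>xs\<in>lists_n k. \<Sum>ys\<in>lists_n k. cnj (f ys) * (kp (ust U) ys xs * g xs))"
    unfolding tinner_def tpw_def
    by (intro sum.cong refl) (auto simp: lists_n_def sum_distrib_right cnj_kp intro!: sum.cong)
  also have "\<dots> = (\<Sum>ys\<in>lists_n k. \<Sum>xs\<in>lists_n k. cnj (f ys) * (kp (ust U) ys xs * g xs))"
    by (rule sum.swap)
  also have "\<dots> = tinner k f (tpw (ust U) k g)"
    unfolding tinner_def tpw_def by (intro sum.cong refl) (auto simp: lists_n_def sum_distrib_left)
  finally show ?thesis .
qed

lemma tpw_inner:
  fixes U :: "'a::finite \<Rightarrow> 'a \<Rightarrow> complex"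
  assumes "unitary U" "tvec k g"
  shows "tinner k (tpw U k f) (tpw U k g) = tinner k f g"
  using assms by (simp add: tpw_adj tpw_inv)

lemma tpw_lin:
  fixes U :: "'a::finite \<Rightarrow> 'a \<Rightarrow> complex"
  assumes "finite J"
  shows "tpw U k (\<lambda>xs. \<Sum>j\<in>J. c j * F j xs) = (\<lambda>xs. \<Sum>j\<in>J. c j * tpw U k (F j) xs)"
proof (rule ext)
  fix xs
  show "tpw U k (\<lambda>xs. \<Sum>j\<in>J. c j * F j xs) xs = (\<Sum>j\<in>J. c j * tpw U k (F j) xs)"
  proof (cases "length xs = k")
    case True
    have "(\<Sum>ys\<in>lists_n k. kp U xs ys * (\<Sum>j\<in>J. c j * F j ys)) = (\<Sum>j\<in>J. \<Sum>ys\<in>lists_n k. c j * (kp U xs ys * F j ys))"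
      by (simp add: sum_distrib_left sum.swap[of _ J] algebra_simps)
    then show ?thesis using True by (simp add: tpw_def sum_distrib_left)
  qed (simp add: tpw_def)
qed

lemma tpw_scale: "tpw U k (\<lambda>xs. c * f xs) = (\<lambda>xs. c * tpw U k f xs)"
  unfolding tpw_def by (intro ext) (simp add: sum_distrib_left algebra_simps)

lemma tpw_normalized:
  fixes U :: "'a::finite \<Rightarrow> 'a \<Rightarrow> complex"
  assumes "unitary U" "tvec k v"
  shows "tpw U k (normalized k v) = normalized k (tpw U k v)"
proof -
  define s where "s = inverse (complex_of_real (sqrt (Re (tinner k v v))))"
  have "normalized k v = (\<lambda>ys. s * v ys)"
    by (simp add: normalized_def s_def divide_inverse mult.commute)
  then have "tpw U k (normalized k v) = (\<lambda>ys. s * tpw U k v ys)" by (simp add: tpw_scale)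
  then show ?thesis
    by (simp add: tpw_inner[OF assms] normalized_def s_def divide_inverse mult.commute)
qed

lemma tpw_tpow:
  fixes U :: "'a::finite \<Rightarrow> 'a \<Rightarrow> complex"
  shows "tpw U k (tpow \<theta> k) = tpow (\<lambda>x. \<Sum>y\<in>UNIV. U x y * \<theta> y) k"
proof (rule ext)
  fix xs
  show "tpw U k (tpow \<theta> k) xs = tpow (\<lambda>x. \<Sum>y\<in>UNIV. U x y * \<theta> y) k xs"
  proof (cases "length xs = k")
    case True
    have "(\<Sum>ys\<in>lists_n k. kp U xs ys * tpow \<theta> k ys) = (\<Sum>ys\<in>lists_n k. \<Prod>i<k. U (xs!i) (ys!i) * \<theta> (ys!i))"
      using True by (intro sum.cong refl) (simp add: kp_def tpow_def lists_n_def prod_list_map_nth prod.distrib)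
    also have "\<dots> = (\<Prod>i<k. \<Sum>y\<in>UNIV. U (xs!i) y * \<theta> y)" by (rule sum_prod_lists)
    finally show ?thesis using True by (simp add: tpw_def tpow_def prod_list_map_nth)
  qed (simp add: tpw_def tpow_def)
qed

lemma tpw_tens:
  fixes U :: "'a::finite \<Rightarrow> 'a \<Rightarrow> complex"
  shows "tpw U (a+b) (tens a f g) = tens a (tpw U a f) (tpw U b g)"
proof (rule ext)
  fix xs
  show "tpw U (a+b) (tens a f g) xs = tens a (tpw U a f) (tpw U b g) xs"
  proof (cases "length xs = a + b")
    case True
    have "tpw U (a+b) (tens a f g) xs = (\<Sum>zs\<in>lists_n (a+b). kp U xs zs * (f (take a zs) * g (drop a zs)))"
      using True by (simp add: tpw_def tens_def)
    also have "\<dots> = (\<Sum>ps\<in>lists_n a. \<Sum>qs\<in>lists_n b. kp U xs (ps@qs) * (f (take a (ps@qs)) * g (drop a (ps@qs))))"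
      by (rule sum_lists_n_append)
    also have "\<dots> = (\<Sum>ps\<in>lists_n a. \<Sum>qs\<in>lists_n b. (kp U (take a xs) ps * f ps) * (kp U (drop a xs) qs * g qs))"
    proof (intro sum.cong refl)
      fix ps qs :: "'a list" assume "ps \<in> lists_n a"
      then have "length ps = length (take a xs)" using True by (simp add: lists_n_def)
      then have "kp U (take a xs @ drop a xs) (ps@qs) = kp U (take a xs) ps * kp U (drop a xs) qs"
        by (rule kp_append)
      then show "kp U xs (ps@qs) * (f (take a (ps@qs)) * g (drop a (ps@qs)))
          = (kp U (take a xs) ps * f ps) * (kp U (drop a xs) qs * g qs)"
        using \<open>ps \<in> lists_n a\<close> by (simp add: algebra_simps lists_n_def)
    qed
    also have "\<dots> = tens a (tpw U a f) (tpw U b g) xs"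
      using True by (simp add: tens_def tpw_def sum_product)
    finally show ?thesis .
  qed (auto simp: tpw_def tens_def)
qed

section \<open>Symmetric vectors\<close>

lemma perm_act_alt: "perm_act n \<pi> f = (\<lambda>xs. if length xs = n then f (permute_list \<pi> xs) else 0)"
  unfolding perm_act_def permute_list_def by (intro ext) auto

lemma permute_list_inv:
  assumes "\<pi> permutes {..<length ys}"
  shows "permute_list (inv \<pi>) (permute_list \<pi> ys) = ys" "permute_list \<pi> (permute_list (inv \<pi>) ys) = ys"
proof -
  have pi': "inv \<pi> permutes {..<length ys}" using assms by (rule permutes_inv)
  have "permute_list (inv \<pi>) (permute_list \<pi> ys) = permute_list (\<pi> \<circ> inv \<pi>) ys"
    using pi' by (simp add: permute_list_compose)
  also have "\<dots> = ys" using permutes_inv_o(1)[OF assms] by simp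
  finally show "permute_list (inv \<pi>) (permute_list \<pi> ys) = ys" .
  have "permute_list \<pi> (permute_list (inv \<pi>) ys) = permute_list (inv \<pi> \<circ> \<pi>) ys"
    using assms by (simp add: permute_list_compose)
  also have "\<dots> = ys" using permutes_inv_o(2)[OF assms] by simp
  finally show "permute_list \<pi> (permute_list (inv \<pi>) ys) = ys" .
qed

lemma sym_tvec_mset_iff:
  "sym_tvec n f \<longleftrightarrow> tvec n f \<and> (\<forall>xs ys. mset xs = mset ys \<longrightarrow> f xs = f ys)"
proof
  assume sym: "sym_tvec n f"
  have "f xs = f ys" if eq: "mset xs = mset ys" for xs ys
  proof (cases "length ys = n")
    case False
    moreover have "length xs = length ys" using eq by (rule mset_eq_length)
    ultimately show ?thesis using sym by (simp add: sym_tvec_def tvec_def)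
  next
    case True
    obtain p where p: "p permutes {..<length ys}" "permute_list p ys = xs"
      using mset_eq_permutation[OF eq] by blast
    have "perm_act n p f ys = f ys" using sym p(1) True by (simp add: sym_tvec_def)
    then show ?thesis using True p(2) by (simp add: perm_act_alt)
  qed
  then show "tvec n f \<and> (\<forall>xs ys. mset xs = mset ys \<longrightarrow> f xs = f ys)"
    using sym unfolding sym_tvec_def by blast
next
  assume f: "tvec n f \<and> (\<forall>xs ys. mset xs = mset ys \<longrightarrow> f xs = f ys)"
  have "perm_act n \<pi> f xs = f xs" if pi: "\<pi> permutes {..<n}" for \<pi> xs
  proof (cases "length xs = n")
    case True
    then have "mset (permute_list \<pi> xs) = mset xs" using pi by (simp add: mset_permute_list)
    then have "f (permute_list \<pi> xs) = f xs" using f by blast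
    then show ?thesis using True by (simp add: perm_act_alt)
  next
    case False
    then show ?thesis using conjunct1[OF f] by (simp add: perm_act_alt tvec_def)
  qed
  then have "\<forall>\<pi>. \<pi> permutes {..<n} \<longrightarrow> perm_act n \<pi> f = f" by (simp add: fun_eq_iff)
  with conjunct1[OF f] show "sym_tvec n f" by (simp add: sym_tvec_def)
qed

lemma sym_mset: "sym_tvec n f \<Longrightarrow> mset xs = mset ys \<Longrightarrow> f xs = f ys"
  unfolding sym_tvec_mset_iff by blast

lemma sym_normalized:
  assumes "sym_tvec k f"
  shows "sym_tvec k (normalized k f)"
proof -
  have "normalized k f xs = normalized k f ys" if "mset xs = mset ys" for xs ys
    using sym_mset[OF assms that] by (simp add: normalized_def)
  moreover have "tvec k (normalized k f)"
    using assms by (simp add: sym_tvec_def tvec_def normalized_def)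
  ultimately show ?thesis unfolding sym_tvec_mset_iff by blast
qed

lemma sym_tpow: "sym_tvec k (tpow \<theta> k)"
proof -
  have "tpow \<theta> k xs = tpow \<theta> k ys" if eq: "mset xs = mset ys" for xs ys
  proof -
    have "length xs = length ys" using eq by (rule mset_eq_length)
    moreover have "prod_list (map \<theta> xs) = prod_list (map \<theta> ys)"
      using eq by (metis mset_map prod_mset_prod_list)
    ultimately show ?thesis by (simp add: tpow_def)
  qed
  moreover have "tvec k (tpow \<theta> k)" by (simp add: tvec_def tpow_def)
  ultimately show ?thesis unfolding sym_tvec_mset_iff by blast
qed

lemma sum_permute_list:
  fixes G :: "'a::finite list \<Rightarrow> complex"
  assumes "\<pi> permutes {..<n}"
  shows "(\<Sum>ys\<in>lists_n n. G (permute_list \<pi> ys)) = (\<Sum>zs\<in>lists_n n. G zs)"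
proof (rule sum.reindex_bij_witness[where i="permute_list (inv \<pi>)" and j="permute_list \<pi>"])
  fix a assume "a \<in> lists_n n"
  then show "permute_list (inv \<pi>) (permute_list \<pi> a) = a" "permute_list \<pi> a \<in> lists_n n"
    using permute_list_inv assms by (auto simp: lists_n_def)
next
  fix b assume "b \<in> lists_n n"
  then show "permute_list \<pi> (permute_list (inv \<pi>) b) = b" "permute_list (inv \<pi>) b \<in> lists_n n"
    using permute_list_inv assms by (auto simp: lists_n_def)
qed simp

lemma kp_permute:
  assumes "\<pi> permutes {..<length xs}" "length ys = length xs"
  shows "kp U (permute_list \<pi> xs) (permute_list \<pi> ys) = kp U xs ys"
proof -
  have pys: "\<pi> permutes {..<length ys}" using assms by simp
  have "kp U (permute_list \<pi> xs) (permute_list \<pi> ys) = prod ((\<lambda>i. U (xs!i) (ys!i)) \<circ> \<pi>) {..<length xs}"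
    unfolding kp_def using assms
    by (intro prod.cong refl) (auto simp: permute_list_nth[OF assms(1)] permute_list_nth[OF pys])
  also have "\<dots> = kp U xs ys" unfolding kp_def by (rule prod.permute[OF assms(1), symmetric])
  finally show ?thesis .
qed

lemma tpw_perm:
  fixes U :: "'a::finite \<Rightarrow> 'a \<Rightarrow> complex"
  assumes pi: "\<pi> permutes {..<n}"
  shows "tpw U n (perm_act n \<pi> f) = perm_act n \<pi> (tpw U n f)"
proof (rule ext)
  fix xs
  show "tpw U n (perm_act n \<pi> f) xs = perm_act n \<pi> (tpw U n f) xs"
  proof (cases "length xs = n")
    case True
    have "tpw U n (perm_act n \<pi> f) xs = (\<Sum>ys\<in>lists_n n. kp U xs ys * f (permute_list \<pi> ys))"
      using True by (auto simp: tpw_def perm_act_alt lists_n_def intro!: sum.cong)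
    also have "\<dots> = (\<Sum>ys\<in>lists_n n. kp U (permute_list \<pi> xs) (permute_list \<pi> ys) * f (permute_list \<pi> ys))"
      using True pi by (intro sum.cong refl) (simp add: kp_permute lists_n_def)
    also have "\<dots> = (\<Sum>zs\<in>lists_n n. kp U (permute_list \<pi> xs) zs * f zs)"
      by (rule sum_permute_list[OF pi, where G="\<lambda>zs. kp U (permute_list \<pi> xs) zs * f zs"])
    also have "\<dots> = perm_act n \<pi> (tpw U n f) xs"
      using True by (simp add: tpw_def perm_act_alt)
    finally show ?thesis .
  qed (simp add: tpw_def perm_act_alt)
qed

lemma sym_tpw:
  fixes U :: "'a::finite \<Rightarrow> 'a \<Rightarrow> complex"
  assumes "sym_tvec n f"
  shows "sym_tvec n (tpw U n f)"
  using assms unfolding sym_tvec_def by (auto simp: tpw_tvec simp flip: tpw_perm)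

section \<open>A unitary rotating theta to a basis vector\<close>

lemma reflection_unitary:
  fixes w :: "'a::finite \<Rightarrow> complex"
  defines "N \<equiv> \<Sum>y\<in>UNIV. cnj (w y) * w y"
  defines "c \<equiv> if N = 0 then 0 else 2 / N"
  shows "unitary (\<lambda>x y. (if x = y then 1 else 0) - c * (w x * cnj (w y)))"
proof -
  define H where "H = (\<lambda>x y. (if x = y then 1 else 0) - c * (w x * cnj (w y)))"
  have "N = complex_of_real (\<Sum>y\<in>UNIV. (cmod (w y))^2)" by (simp add: N_def cnj_mult_self)
  then have "cnj c = c" by (simp add: c_def)
  then have Hc: "cnj (H y x) = H x y" for x y by (auto simp: H_def mult.commute)
  have c2: "c * c * N = 2 * c" by (auto simp: c_def field_simps)
  have HH: "(\<Sum>y\<in>UNIV. H x y * H y z) = (if x = z then 1 else 0)" for x z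
  proof -
    have "(\<Sum>y\<in>UNIV. H x y * H y z) = (\<Sum>y\<in>UNIV. (if x = y then 1 else 0) * (if y = z then 1 else 0))
        - c * cnj (w z) * (\<Sum>y\<in>UNIV. (if y = x then 1 else 0) * w y)
        - c * w x * (\<Sum>y\<in>UNIV. (if y = z then 1 else 0) * cnj (w y))
        + c * c * w x * cnj (w z) * N"
      by (simp add: H_def N_def algebra_simps sum.distrib sum_subtractf sum_distrib_left eq_commute[of x])
    also have "\<dots> = (if x = z then 1 else 0) + w x * cnj (w z) * (c * c * N - 2 * c)"
      by (simp add: sum_delta_mult algebra_simps if_distrib[of "\<lambda>v. v * _"] cong: if_cong)
    finally show ?thesis using c2 by simp
  qed
  show ?thesis
    unfolding H_def[symmetric] unitary_def mm_def ust_def by (simp add: Hc HH)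
qed

lemma unitary_phase:
  fixes U :: "'a::finite \<Rightarrow> 'a \<Rightarrow> complex"
  assumes \<phi>: "cnj \<phi> * \<phi> = 1" and U: "unitary U"
  shows "unitary (\<lambda>x y. \<phi> * U x y)"
proof -
  have l: "cnj (\<phi> * a) * (\<phi> * b) = cnj a * b" for a b
  proof -
    have "cnj (\<phi> * a) * (\<phi> * b) = (cnj \<phi> * \<phi>) * (cnj a * b)" by (simp add: algebra_simps)
    then show ?thesis using \<phi> by simp
  qed
  have r: "\<phi> * a * cnj (\<phi> * b) = a * cnj b" for a b
  proof -
    have "\<phi> * a * cnj (\<phi> * b) = (cnj \<phi> * \<phi>) * (a * cnj b)" by (simp add: algebra_simps)
    then show ?thesis using \<phi> by simp
  qed
  show ?thesis using U unfolding unitary_def mm_def ust_def by (simp only: l r)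
qed

lemma unitary_row_of_image:
  fixes U :: "'a::finite \<Rightarrow> 'a \<Rightarrow> complex"
  assumes U: "unitary U" and U\<theta>: "\<And>x. (\<Sum>y\<in>UNIV. U x y * \<theta> y) = (if x = b then 1 else 0)"
  shows "U b y = cnj (\<theta> y)"
proof -
  have orth: "(\<Sum>x\<in>UNIV. cnj (U x y) * U x z) = (if y = z then 1 else 0)" for z
    using fun_cong[OF fun_cong[OF conjunct1[OF U[unfolded unitary_def]]], of y z] by (simp add: mm_def ust_def)
  have "\<theta> y = (\<Sum>z\<in>UNIV. (if y = z then 1 else 0) * \<theta> z)"
    by (simp add: sum_delta_mult eq_commute[of y])
  also have "\<dots> = (\<Sum>z\<in>UNIV. \<Sum>x\<in>UNIV. cnj (U x y) * U x z * \<theta> z)"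
    by (simp add: orth[symmetric] sum_distrib_right)
  also have "\<dots> = (\<Sum>x\<in>UNIV. cnj (U x y) * (\<Sum>z\<in>UNIV. U x z * \<theta> z))"
    by (subst sum.swap) (simp add: sum_distrib_left mult.assoc)
  also have "\<dots> = cnj (U b y)"
    unfolding U\<theta> by (simp add: sum_delta_mult)
  finally show ?thesis by simp
qed

lemma reflection_maps:
  fixes \<theta> t :: "'a::finite \<Rightarrow> complex"
  assumes \<theta>\<theta>: "(\<Sum>y\<in>UNIV. cnj (\<theta> y) * \<theta> y) = 1" and tt: "(\<Sum>y\<in>UNIV. cnj (t y) * t y) = 1"
    and t\<theta>: "(\<Sum>y\<in>UNIV. cnj (t y) * \<theta> y) = complex_of_real \<rho>"
  defines "w \<equiv> \<lambda>x. \<theta> x - t x"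
  defines "N \<equiv> \<Sum>y\<in>UNIV. cnj (w y) * w y"
  defines "c \<equiv> if N = 0 then 0 else 2 / N"
  shows "(\<Sum>y\<in>UNIV. ((if x = y then 1 else 0) - c * (w x * cnj (w y))) * \<theta> y) = t x"
proof -
  have \<theta>t: "(\<Sum>y\<in>UNIV. cnj (\<theta> y) * t y) = complex_of_real \<rho>"
    using arg_cong[OF t\<theta>, of cnj] by (simp add: mult.commute)
  have w\<theta>: "(\<Sum>y\<in>UNIV. cnj (w y) * \<theta> y) = 1 - complex_of_real \<rho>"
    using \<theta>\<theta> t\<theta> by (simp add: w_def algebra_simps sum_subtractf)
  have "N = (\<Sum>y\<in>UNIV. cnj (w y) * \<theta> y) - (\<Sum>y\<in>UNIV. cnj (\<theta> y) * t y) + (\<Sum>y\<in>UNIV. cnj (t y) * t y)"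
    by (simp add: N_def w_def algebra_simps sum_subtractf sum.distrib)
  then have Nval: "N = 2 - 2 * complex_of_real \<rho>" using w\<theta> \<theta>t tt by simp
  text \<open>Either w = 0, or c <w, theta> = 1.\<close>
  have cw: "c * w x * (1 - complex_of_real \<rho>) = w x"
  proof (cases "N = 0")
    case True
    have "N = complex_of_real (\<Sum>y\<in>UNIV. (cmod (w y))^2)" by (simp add: N_def cnj_mult_self)
    then have "(\<Sum>y\<in>UNIV. (cmod (w y))^2) = 0" using True by (metis of_real_eq_0_iff)
    then have "(cmod (w x))^2 = 0" by (subst (asm) sum_nonneg_eq_0_iff) auto
    then show ?thesis by simp
  next
    case False
    then have "c * (1 - complex_of_real \<rho>) = 1" using Nval by (auto simp: c_def field_simps)
    then show ?thesis by (simp add: ac_simps)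
  qed
  have "(\<Sum>y\<in>UNIV. ((if x = y then 1 else 0) - c * (w x * cnj (w y))) * \<theta> y)
      = \<theta> x - c * w x * (\<Sum>y\<in>UNIV. cnj (w y) * \<theta> y)"
    by (simp add: left_diff_distrib sum_subtractf sum_distrib_left mult.assoc if_distrib[of "\<lambda>v. v * _"] cong: if_cong)
  also have "\<dots> = \<theta> x - w x" unfolding w\<theta> cw ..
  finally show ?thesis by (simp add: w_def)
qed

text \<open>Every unit vector theta, conjugated, is the b-th row of some unitary: a Householder
  reflection exchanging theta with a phase multiple of e_b, followed by a phase.\<close>
lemma rotation_to_basis_vector:
  fixes \<theta> :: "'a::finite \<Rightarrow> complex" and b :: 'a
  assumes th: "unit_vec \<theta>"
  obtains U where "unitary U" "\<And>y. U b y = cnj (\<theta> y)"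
proof -
  define s where "s = \<theta> b"
  define \<phi> where "\<phi> = (if s = 0 then 1 else s / complex_of_real (cmod s))"
  have \<phi>1: "cnj \<phi> * \<phi> = 1"
    by (cases "s = 0") (simp_all add: \<phi>_def cnj_mult_self power2_eq_square)
  have \<phi>s: "cnj \<phi> * s = complex_of_real (cmod s)"
    by (cases "s = 0") (simp_all add: \<phi>_def cnj_mult_self power2_eq_square)
  define t where "t = (\<lambda>x. if x = b then \<phi> else 0)"
  have tt: "(\<Sum>y\<in>UNIV. cnj (t y) * t y) = 1" and t\<theta>: "(\<Sum>y\<in>UNIV. cnj (t y) * \<theta> y) = complex_of_real (cmod s)"
    unfolding t_def using \<phi>1 \<phi>s by (simp_all add: if_distrib[of cnj] sum_delta_mult s_def cong: if_cong)
  define w where "w = (\<lambda>x. \<theta> x - t x)"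
  define N where "N = (\<Sum>y\<in>UNIV. cnj (w y) * w y)"
  define c where "c = (if N = 0 then 0 else 2 / N)"
  define H where "H = (\<lambda>x y. (if x = y then 1 else 0) - c * (w x * cnj (w y)))"
  have "unitary H" unfolding H_def c_def N_def by (rule reflection_unitary)
  then have U: "unitary (\<lambda>x y. cnj \<phi> * H x y)"
    by (rule unitary_phase[rotated]) (use \<phi>1 in \<open>simp add: mult.commute\<close>)
  have "(\<Sum>y\<in>UNIV. H x y * \<theta> y) = t x" for x
    unfolding H_def c_def N_def w_def
    by (rule reflection_maps[OF th[unfolded unit_vec_def] tt t\<theta>])
  then have "(\<Sum>y\<in>UNIV. cnj \<phi> * H x y * \<theta> y) = (if x = b then 1 else 0)" for x
    using \<phi>1 by (simp add: mult.assoc flip: sum_distrib_left) (simp add: t_def)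
  then show ?thesis using that U unitary_row_of_image[OF U] by blast
qed

section \<open>The combinatorial estimate on symmetric vectors\<close>

definition dev :: "'a \<Rightarrow> 'a list \<Rightarrow> nat" where
  "dev b xs = length (filter (\<lambda>x. x \<noteq> b) xs)"

lemma cnt_dev: "(\<Sum>i<length xs. if xs!i = b then 1 else (0::real)) + real (dev b xs) = real (length xs)"
proof (induction xs)
  case Nil then show ?case by (simp add: dev_def)
next
  case (Cons x xs)
  then show ?case
    by (simp del: sum.lessThan_Suc add: sum.lessThan_Suc_shift dev_def split: if_splits)
qed

lemma sum_ins:
  fixes h :: "'a::finite list \<Rightarrow> real"
  assumes i: "i < Suc l"
  shows "(\<Sum>xs\<in>lists_n (Suc l). if xs!i = b then h xs else 0) = (\<Sum>ys\<in>lists_n l. h (take i ys @ b # drop i ys))"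
proof -
  define ins where "ins = (\<lambda>ys::'a list. take i ys @ b # drop i ys)"
  have inj: "inj_on ins (lists_n l)"
  proof (rule inj_onI)
    fix ys ys' assume ys: "ys \<in> lists_n l" "ys' \<in> lists_n l" and eq: "ins ys = ins ys'"
    have li: "length (take i ys) = i" "length (take i ys') = i" using ys i by (auto simp: lists_n_def)
    have "take i (ins ys) = take i ys" "take i (ins ys') = take i ys'"
      using li by (auto simp: ins_def)
    then have t: "take i ys = take i ys'" using eq by simp
    have "drop (Suc i) (ins ys) = drop i ys" "drop (Suc i) (ins ys') = drop i ys'"
      using li by (auto simp: ins_def)
    then have d: "drop i ys = drop i ys'" using eq by simp
    show "ys = ys'" using t d by (metis append_take_drop_id)
  qed
  have img: "ins ` lists_n l = {xs \<in> lists_n (Suc l). xs!i = b}"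
  proof (intro equalityI subsetI)
    fix xs assume "xs \<in> ins ` lists_n l"
    then obtain ys where ys: "ys \<in> lists_n l" "xs = ins ys" by blast
    have "length (take i ys) = i" using ys i by (auto simp: lists_n_def)
    then show "xs \<in> {xs \<in> lists_n (Suc l). xs!i = b}"
      using ys by (auto simp: ins_def lists_n_def nth_append)
  next
    fix xs assume "xs \<in> {xs \<in> lists_n (Suc l). xs!i = b}"
    then have xs: "length xs = Suc l" "xs!i = b" by (auto simp: lists_n_def)
    define ys where "ys = take i xs @ drop (Suc i) xs"
    have "ys \<in> lists_n l" using xs i by (simp add: ys_def lists_n_def)
    moreover have "ins ys = xs"
    proof -
      have "ins ys = take i xs @ b # drop (Suc i) xs" using xs i by (simp add: ins_def ys_def)
      also have "\<dots> = xs" using xs i id_take_nth_drop[of i xs] by simp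
      finally show ?thesis .
    qed
    ultimately show "xs \<in> ins ` lists_n l" by blast
  qed
  have "(\<Sum>xs\<in>lists_n (Suc l). if xs!i = b then h xs else 0) = (\<Sum>xs\<in>{xs \<in> lists_n (Suc l). xs!i = b}. h xs)"
    by (simp add: sum.inter_filter)
  also have "\<dots> = (\<Sum>ys\<in>lists_n l. h (ins ys))"
    unfolding img[symmetric] by (rule sum.reindex[OF inj, unfolded o_def])
  finally show ?thesis by (simp add: ins_def)
qed

lemma dev_ins: "i \<le> length ys \<Longrightarrow> dev b (take i ys @ b # drop i ys) = dev b ys"
proof -
  have "filter (\<lambda>x. x \<noteq> b) (take i ys @ b # drop i ys) = filter (\<lambda>x. x \<noteq> b) (take i ys) @ filter (\<lambda>x. x \<noteq> b) (drop i ys)"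
    by simp
  also have "\<dots> = filter (\<lambda>x. x \<noteq> b) ys" by (metis append_take_drop_id filter_append)
  finally show ?thesis unfolding dev_def by simp
qed

lemma mset_ins: "mset (replicate j b @ take i ys @ b # drop i ys) = mset (replicate (Suc j) b @ ys)"
proof -
  have td: "mset (take i ys) + mset (drop i ys) = mset ys" by (metis append_take_drop_id mset_append)
  have "mset (replicate j b @ take i ys @ b # drop i ys) = mset (replicate j b) + (mset (take i ys) + mset (drop i ys)) + {#b#}"
    by (simp add: ac_simps)
  also have "\<dots> = mset (replicate (Suc j) b @ ys)" unfolding td by (simp add: ac_simps)
  finally show ?thesis .
qed

definition tail_weight :: "('a list \<Rightarrow> complex) \<Rightarrow> 'a \<Rightarrow> nat \<Rightarrow> nat \<Rightarrow> nat \<Rightarrow> real" where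
  "tail_weight \<Phi> b r n j = (\<Sum>xs\<in>lists_n (n-j). if r < dev b xs then (cmod (\<Phi> (replicate j b @ xs)))^2 else 0)"

lemma tail_weight_nonneg: "0 \<le> tail_weight \<Phi> b r n j"
  unfolding tail_weight_def by (rule sum_nonneg) auto

text \<open>Double counting: weighting the lists of level j by their number of b's counts every list
  of level j+1 once per position, by symmetry of Phi.\<close>
lemma tail_weight_double_count:
  fixes \<Phi> :: "'a::finite list \<Rightarrow> complex"
  assumes sym: "sym_tvec n \<Phi>" and j: "j < n"
  shows "(\<Sum>xs\<in>lists_n (n-j). (if r < dev b xs then (cmod (\<Phi> (replicate j b @ xs)))^2 else 0)
            * (\<Sum>i<n-j. if xs!i = b then 1 else 0))
         = real (n-j) * tail_weight \<Phi> b r n (Suc j)"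
proof -
  define k where "k = n - j"
  define l where "l = n - Suc j"
  have kl: "k = Suc l" using j by (simp add: k_def l_def)
  define g where "g = (\<lambda>xs. (cmod (\<Phi> xs))^2)"
  have "(\<Sum>xs\<in>lists_n k. (if r < dev b xs then g (replicate j b @ xs) else 0) * (\<Sum>i<k. if xs!i = b then 1 else 0))
      = (\<Sum>xs\<in>lists_n k. \<Sum>i<k. if xs!i = b then (if r < dev b xs then g (replicate j b @ xs) else 0) else 0)"
    unfolding sum_distrib_left by (intro sum.cong refl) auto
  also have "\<dots> = (\<Sum>i<k. \<Sum>xs\<in>lists_n k. if xs!i = b then (if r < dev b xs then g (replicate j b @ xs) else 0) else 0)"
    by (rule sum.swap)
  also have "\<dots> = (\<Sum>i<k. tail_weight \<Phi> b r n (Suc j))"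
  proof (rule sum.cong[OF refl])
    fix i assume "i \<in> {..<k}"
    then have i: "i < Suc l" using kl by simp
    have "(\<Sum>xs\<in>lists_n k. if xs!i = b then (if r < dev b xs then g (replicate j b @ xs) else 0) else 0)
        = (\<Sum>ys\<in>lists_n l. if r < dev b (take i ys @ b # drop i ys) then g (replicate j b @ (take i ys @ b # drop i ys)) else 0)"
      unfolding kl by (rule sum_ins[OF i])
    also have "\<dots> = (\<Sum>ys\<in>lists_n l. if r < dev b ys then g (replicate (Suc j) b @ ys) else 0)"
    proof (rule sum.cong[OF refl])
      fix ys :: "'a list" assume "ys \<in> lists_n l"
      then have "i \<le> length ys" using i by (simp add: lists_n_def)
      moreover have "\<Phi> (replicate j b @ take i ys @ b # drop i ys) = \<Phi> (replicate (Suc j) b @ ys)"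
        by (rule sym_mset[OF sym mset_ins])
      ultimately show "(if r < dev b (take i ys @ b # drop i ys) then g (replicate j b @ (take i ys @ b # drop i ys)) else 0)
          = (if r < dev b ys then g (replicate (Suc j) b @ ys) else 0)"
        by (simp add: dev_ins g_def)
    qed
    finally show "(\<Sum>xs\<in>lists_n k. if xs!i = b then (if r < dev b xs then g (replicate j b @ xs) else 0) else 0)
        = tail_weight \<Phi> b r n (Suc j)"
      unfolding tail_weight_def g_def l_def by simp
  qed
  also have "\<dots> = real k * tail_weight \<Phi> b r n (Suc j)" by simp
  finally show ?thesis by (simp only: k_def g_def)
qed

text \<open>Each list counted at level j has at most n-j-(r+1) letters b, hence the recursion.\<close>
lemma tail_weight_step:
  fixes \<Phi> :: "'a::finite list \<Rightarrow> complex"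
  assumes sym: "sym_tvec n \<Phi>" and j: "j < n"
  shows "real (n-j) * tail_weight \<Phi> b r n (Suc j) \<le> (real (n-j) - real (Suc r)) * tail_weight \<Phi> b r n j"
proof -
  define k where "k = n - j"
  define g where "g = (\<lambda>xs. if r < dev b xs then (cmod (\<Phi> (replicate j b @ xs)))^2 else 0)"
  have "real k * tail_weight \<Phi> b r n (Suc j) = (\<Sum>xs\<in>lists_n k. g xs * (\<Sum>i<k. if xs!i = b then 1 else 0))"
    using tail_weight_double_count[OF sym j, of r b] by (simp add: k_def g_def)
  also have "\<dots> \<le> (\<Sum>xs\<in>lists_n k. g xs * (real k - real (Suc r)))"
  proof (rule sum_mono)
    fix xs :: "'a list" assume "xs \<in> lists_n k"
    then have "(\<Sum>i<k. if xs!i = b then 1 else 0) + real (dev b xs) = real k"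
      using cnt_dev[of xs b] by (simp add: lists_n_def)
    then show "g xs * (\<Sum>i<k. if xs!i = b then 1 else 0) \<le> g xs * (real k - real (Suc r))"
      by (auto simp: g_def intro: mult_left_mono)
  qed
  also have "\<dots> = (real k - real (Suc r)) * tail_weight \<Phi> b r n j"
    unfolding tail_weight_def g_def k_def sum_distrib_left by (intro sum.cong refl) (simp add: mult.commute)
  finally show ?thesis by (simp add: k_def)
qed

lemma tail_weight_bound:
  fixes \<Phi> :: "'a::finite list \<Rightarrow> complex"
  assumes sym: "sym_tvec n \<Phi>" and mn: "m \<le> n"
  shows "tail_weight \<Phi> b r n m \<le> exp (- (real m * real r) / real n) * (\<Sum>xs\<in>lists_n n. (cmod (\<Phi> xs))^2)"
proof -
  define A where "A = tail_weight \<Phi> b r n"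
  define q where "q = exp (- real r / real n)"
  have step: "A (Suc j) \<le> q * A j" if "j < n" for j
  proof -
    have kpos: "0 < real (n-j)" using that by simp
    have "A (Suc j) \<le> (1 - real (Suc r) / real (n-j)) * A j"
      using tail_weight_step[OF sym that, of b r] kpos by (simp add: A_def field_simps)
    also have "\<dots> \<le> q * A j"
    proof (rule mult_right_mono)
      have "real (Suc r) / real n \<le> real (Suc r) / real (n-j)"
        using kpos by (intro divide_left_mono) auto
      moreover have "1 - real (Suc r) / real n \<le> exp (- (real (Suc r) / real n))"
        using exp_ge_add_one_self[of "- (real (Suc r) / real n)"] by simp
      moreover have "exp (- (real (Suc r) / real n)) \<le> q"
        unfolding q_def using that by (simp add: divide_right_mono)
      ultimately show "1 - real (Suc r) / real (n-j) \<le> q"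
        by (meson diff_left_mono order_trans)
    qed (simp add: A_def tail_weight_nonneg)
    finally show ?thesis .
  qed
  have iter: "A j \<le> q^j * A 0" if "j \<le> m" for j
    using that
  proof (induction j)
    case 0 then show ?case by simp
  next
    case (Suc j)
    then have "A (Suc j) \<le> q * A j" using mn by (intro step) simp
    also have "\<dots> \<le> q * (q^j * A 0)" using Suc by (intro mult_left_mono) (auto simp: q_def)
    finally show ?case by (simp add: mult.assoc)
  qed
  have "q^m = exp (- (real m * real r) / real n)"
    unfolding q_def exp_of_nat_mult[symmetric] by simp
  moreover have "A 0 \<le> (\<Sum>xs\<in>lists_n n. (cmod (\<Phi> xs))^2)"
    unfolding A_def tail_weight_def by simp (intro sum_mono, auto)
  ultimately show ?thesis
    using iter[of m] by (simp add: A_def) (meson exp_ge_zero mult_left_mono order_trans)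
qed

section \<open>Contraction with theta on the first m factors\<close>

definition contr :: "nat \<Rightarrow> ('a \<Rightarrow> complex) \<Rightarrow> ('a list \<Rightarrow> complex) \<Rightarrow> ('a list \<Rightarrow> complex)" where
  "contr m \<theta> \<Psi> = (\<lambda>ys. \<Sum>xs\<in>lists_n m. cnj (tpow \<theta> m xs) * \<Psi> (xs @ ys))"

lemma contr_tvec:
  assumes "tvec n \<Psi>" "m \<le> n"
  shows "tvec (n-m) (contr m \<theta> \<Psi>)"
  using assms unfolding tvec_def contr_def lists_n_def by auto

lemma tpow_append:
  "length xs = a \<Longrightarrow> length ys = b \<Longrightarrow> tpow \<theta> (a+b) (xs@ys) = tpow \<theta> a xs * tpow \<theta> b ys"
  by (simp add: tpow_def)

lemma tpow_norm:
  fixes \<theta> :: "'a::finite \<Rightarrow> complex"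
  assumes "unit_vec \<theta>"
  shows "tinner k (tpow \<theta> k) (tpow \<theta> k) = 1"
proof -
  have "tinner k (tpow \<theta> k) (tpow \<theta> k) = (\<Sum>ys\<in>lists_n k. \<Prod>i<k. cnj (\<theta> (ys!i)) * \<theta> (ys!i))"
    unfolding tinner_def by (intro sum.cong refl) (simp add: tpow_def lists_n_def prod_list_map_nth prod.distrib)
  also have "\<dots> = (\<Prod>i<k. \<Sum>y\<in>UNIV. cnj (\<theta> y) * \<theta> y)" by (rule sum_prod_lists)
  also have "\<dots> = 1" using assms by (simp add: unit_vec_def)
  finally show ?thesis .
qed

lemma contr_inner:
  fixes \<Psi> :: "'a::finite list \<Rightarrow> complex"
  assumes "m \<le> n"
  shows "tinner (n-m) (tpow \<theta> (n-m)) (contr m \<theta> \<Psi>) = tinner n (tpow \<theta> n) \<Psi>"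
proof -
  define k where "k = n - m"
  have n: "n = m + k" using assms by (simp add: k_def)
  have "tinner k (tpow \<theta> k) (contr m \<theta> \<Psi>) = (\<Sum>ys\<in>lists_n k. \<Sum>xs\<in>lists_n m. cnj (tpow \<theta> (m+k) (xs@ys)) * \<Psi> (xs @ ys))"
    unfolding tinner_def contr_def
    by (intro sum.cong refl) (auto simp: sum_distrib_left tpow_append lists_n_def mult.assoc mult.left_commute intro!: sum.cong)
  also have "\<dots> = (\<Sum>xs\<in>lists_n m. \<Sum>ys\<in>lists_n k. cnj (tpow \<theta> (m+k) (xs@ys)) * \<Psi> (xs @ ys))"
    by (rule sum.swap)
  also have "\<dots> = tinner n (tpow \<theta> n) \<Psi>"
    unfolding tinner_def n by (rule sum_lists_n_append[symmetric])
  finally show ?thesis by (simp add: k_def)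
qed

lemma ptrace_qform:
  fixes \<Psi> :: "'a::finite list \<Rightarrow> complex"
  shows "qform k (ptrace m (proj \<Psi> \<Psi>)) y
    = complex_of_real (\<Sum>ws\<in>lists_n m. (cmod (\<Sum>ys\<in>lists_n k. cnj (y ys) * \<Psi> (ws @ ys)))^2)"
proof -
  define B where "B = (\<lambda>ws. \<Sum>ys\<in>lists_n k. cnj (y ys) * \<Psi> (ws @ ys))"
  have "qform k (ptrace m (proj \<Psi> \<Psi>)) y = (\<Sum>xs\<in>lists_n k. \<Sum>zs\<in>lists_n k. \<Sum>ws\<in>lists_n m. (cnj (y xs) * \<Psi> (ws @ xs)) * (cnj (\<Psi> (ws @ zs)) * y zs))"
    unfolding qform_def ptrace_def proj_def
    by (simp add: sum_distrib_left sum_distrib_right mult.assoc mult.left_commute)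
  also have "\<dots> = (\<Sum>xs\<in>lists_n k. \<Sum>ws\<in>lists_n m. \<Sum>zs\<in>lists_n k. (cnj (y xs) * \<Psi> (ws @ xs)) * (cnj (\<Psi> (ws @ zs)) * y zs))"
    by (rule sum.cong[OF refl], rule sum.swap)
  also have "\<dots> = (\<Sum>ws\<in>lists_n m. \<Sum>xs\<in>lists_n k. \<Sum>zs\<in>lists_n k. (cnj (y xs) * \<Psi> (ws @ xs)) * (cnj (\<Psi> (ws @ zs)) * y zs))"
    by (rule sum.swap)
  also have "\<dots> = (\<Sum>ws\<in>lists_n m. \<Sum>xs\<in>lists_n k. \<Sum>zs\<in>lists_n k. (cnj (y xs) * \<Psi> (ws @ xs)) * cnj (cnj (y zs) * \<Psi> (ws @ zs)))"
    by (intro sum.cong refl) (simp add: ac_simps)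
  also have "\<dots> = (\<Sum>ws\<in>lists_n m. B ws * cnj (B ws))"
    unfolding B_def cnj_sum sum_product ..
  also have "\<dots> = complex_of_real (\<Sum>ws\<in>lists_n m. (cmod (B ws))^2)"
    unfolding of_real_sum by (simp only: complex_norm_square)
  finally show ?thesis by (simp add: B_def)
qed

lemma proj_qform:
  fixes u :: "'a::finite list \<Rightarrow> complex"
  shows "qform k (proj u u) y = complex_of_real ((cmod (tinner k y u))^2)"
proof -
  have "qform k (proj u u) y = tinner k y u * cnj (tinner k y u)"
    unfolding qform_def proj_def tinner_def by (simp add: sum_product mult.commute mult.left_commute)
  then show ?thesis by (simp only: complex_norm_square)
qed

lemma qform_diff: "qform k (\<lambda>xs ys. C * A xs ys - B xs ys) y = C * qform k A y - qform k B y"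
  unfolding qform_def by (simp add: algebra_simps sum_subtractf sum_distrib_left)

lemma contr_inner_y:
  fixes \<Psi> :: "'a::finite list \<Rightarrow> complex"
  shows "tinner k y (contr m \<theta> \<Psi>) = tinner m (tpow \<theta> m) (\<lambda>ws. \<Sum>ys\<in>lists_n k. cnj (y ys) * \<Psi> (ws @ ys))"
proof -
  have "tinner k y (contr m \<theta> \<Psi>) = (\<Sum>ys\<in>lists_n k. \<Sum>ws\<in>lists_n m. cnj (tpow \<theta> m ws) * (cnj (y ys) * \<Psi> (ws @ ys)))"
    unfolding tinner_def contr_def by (simp add: sum_distrib_left mult.left_commute)
  also have "\<dots> = (\<Sum>ws\<in>lists_n m. \<Sum>ys\<in>lists_n k. cnj (tpow \<theta> m ws) * (cnj (y ys) * \<Psi> (ws @ ys)))"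
    by (rule sum.swap)
  also have "\<dots> = tinner m (tpow \<theta> m) (\<lambda>ws. \<Sum>ys\<in>lists_n k. cnj (y ys) * \<Psi> (ws @ ys))"
    unfolding tinner_def by (simp add: sum_distrib_left)
  finally show ?thesis .
qed

text \<open>Cauchy-Schwarz: the contraction has squared norm at least |<Psi, theta^n>|^2.\<close>
lemma contr_norm_ge:
  fixes \<Psi> :: "'a::finite list \<Rightarrow> complex"
  assumes "unit_vec \<theta>" "m \<le> n"
  shows "(cmod (tinner n \<Psi> (tpow \<theta> n)))^2 \<le> Re (tinner (n-m) (contr m \<theta> \<Psi>) (contr m \<theta> \<Psi>))"
proof -
  have "tinner (n-m) (tpow \<theta> (n-m)) (contr m \<theta> \<Psi>) = cnj (tinner n \<Psi> (tpow \<theta> n))"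
    unfolding contr_inner[OF assms(2)] by (rule tinner_cnj)
  moreover have "(cmod (tinner (n-m) (tpow \<theta> (n-m)) (contr m \<theta> \<Psi>)))^2
      \<le> Re (tinner (n-m) (tpow \<theta> (n-m)) (tpow \<theta> (n-m))) * Re (tinner (n-m) (contr m \<theta> \<Psi>) (contr m \<theta> \<Psi>))"
    by (rule tinner_CS)
  ultimately show ?thesis using tpow_norm[OF assms(1)] by simp
qed

text \<open>First claim of the theorem: if a^2 <= |v|^2 then |v><v|/|v|^2 <= a^(-2) tr_{1..m} |Psi><Psi|,
  since |<y, v>|^2 <= <y| tr_{1..m} |Psi><Psi| |y> by Cauchy-Schwarz on the first m sites.\<close>
lemma normalized_contr_le_ptrace:
  fixes \<Psi> :: "'a::finite list \<Rightarrow> complex" and \<theta> :: "'a \<Rightarrow> complex"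
  assumes u\<theta>: "unit_vec \<theta>" and a: "0 < a" "a^2 \<le> Re (tinner k (contr m \<theta> \<Psi>) (contr m \<theta> \<Psi>))"
  defines "u \<equiv> normalized k (contr m \<theta> \<Psi>)"
  shows "op_le k (proj u u) (\<lambda>xs ys. complex_of_real ((inverse a)^2) * ptrace m (proj \<Psi> \<Psi>) xs ys)"
  unfolding op_le_def psd_def
proof (intro allI impI)
  fix y :: "'a list \<Rightarrow> complex"
  define v where "v = contr m \<theta> \<Psi>"
  define N2 where "N2 = Re (tinner k v v)"
  have Npos: "0 < N2" using a by (simp add: N2_def v_def) (meson less_le_trans zero_less_power)
  define B where "B = (\<lambda>ws. \<Sum>ys\<in>lists_n k. cnj (y ys) * \<Psi> (ws @ ys))"
  define SB where "SB = (\<Sum>ws\<in>lists_n m. (cmod (B ws))^2)"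
  define ic where "ic = (inverse a)^2"
  have q: "qform k (\<lambda>xs ys. complex_of_real ic * ptrace m (proj \<Psi> \<Psi>) xs ys - proj u u xs ys) y
      = complex_of_real (ic * SB - (cmod (tinner k y u))^2)"
    unfolding qform_diff ptrace_qform proj_qform by (simp add: B_def SB_def)
  have yv: "tinner k y v = tinner m (tpow \<theta> m) B" unfolding v_def B_def by (rule contr_inner_y)
  have "(cmod (tinner k y v))^2 \<le> Re (tinner m (tpow \<theta> m) (tpow \<theta> m)) * Re (tinner m B B)"
    unfolding yv by (rule tinner_CS)
  then have yvSB: "(cmod (tinner k y v))^2 \<le> SB"
    using tpow_norm[OF u\<theta>] by (simp add: SB_def tinner_self_Re)
  have yu: "tinner k y u = tinner k y v / complex_of_real (sqrt N2)"
    unfolding u_def v_def N2_def normalized_def tinner_def by (simp add: sum_divide_distrib)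
  have "(cmod (tinner k y u))^2 = (cmod (tinner k y v))^2 / N2"
    unfolding yu using Npos by (simp add: norm_divide power_divide)
  also have "\<dots> \<le> SB / N2" using yvSB Npos by (simp add: divide_right_mono)
  also have "\<dots> \<le> SB / a^2"
    using a Npos by (intro divide_left_mono) (auto simp: SB_def N2_def v_def intro: sum_nonneg)
  also have "\<dots> = ic * SB" by (simp add: ic_def field_simps power_inverse)
  finally have le: "(cmod (tinner k y u))^2 \<le> ic * SB" .
  show "qform k (\<lambda>xs ys. complex_of_real ((inverse a)^2) * ptrace m (proj \<Psi> \<Psi>) xs ys - proj u u xs ys) y \<in> \<real> \<and>
        0 \<le> Re (qform k (\<lambda>xs ys. complex_of_real ((inverse a)^2) * ptrace m (proj \<Psi> \<Psi>) xs ys - proj u u xs ys) y)"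
    unfolding ic_def[symmetric] q using le by simp
qed

section \<open>Almost power states\<close>

lemma lin_span_single: "f \<in> S \<Longrightarrow> f \<in> lin_span S"
  unfolding lin_span_def by (rule CollectI, rule exI[of _ "{f}"], rule exI[of _ "\<lambda>_. 1"]) auto

lemma lin_span_zero: "(\<lambda>xs. 0) \<in> lin_span S"
  unfolding lin_span_def by (rule CollectI, rule exI[of _ "{}"]) auto

lemma sum_if_subset:
  assumes "finite A" "B \<subseteq> A"
  shows "(\<Sum>w\<in>A. if w \<in> B then h w else 0) = (\<Sum>w\<in>B. h w)"
proof -
  have "(\<Sum>w\<in>A. if w \<in> B then h w else 0) = sum h {w \<in> A. w \<in> B}"
    using assms by (simp add: sum.inter_filter)
  also have "{w \<in> A. w \<in> B} = B" using assms by auto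
  finally show ?thesis .
qed

lemma lin_span_add:
  assumes "f \<in> lin_span S" "g \<in> lin_span S"
  shows "(\<lambda>xs. a * f xs + g xs) \<in> lin_span S"
proof -
  obtain F1 c1 where F1: "finite F1" "F1 \<subseteq> S" "f = (\<lambda>xs. \<Sum>w\<in>F1. c1 w * w xs)"
    using assms(1) unfolding lin_span_def by blast
  obtain F2 c2 where F2: "finite F2" "F2 \<subseteq> S" "g = (\<lambda>xs. \<Sum>w\<in>F2. c2 w * w xs)"
    using assms(2) unfolding lin_span_def by blast
  define c where "c = (\<lambda>w. a * (if w \<in> F1 then c1 w else 0) + (if w \<in> F2 then c2 w else 0))"
  have "(\<lambda>xs. a * f xs + g xs) = (\<lambda>xs. \<Sum>w\<in>F1 \<union> F2. c w * w xs)"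
  proof (rule ext)
    fix xs
    have cw: "c w * w xs = a * (if w \<in> F1 then c1 w * w xs else 0) + (if w \<in> F2 then c2 w * w xs else 0)" for w
      by (auto simp: c_def algebra_simps)
    have "(\<Sum>w\<in>F1 \<union> F2. c w * w xs) = a * (\<Sum>w\<in>F1 \<union> F2. if w \<in> F1 then c1 w * w xs else 0)
        + (\<Sum>w\<in>F1 \<union> F2. if w \<in> F2 then c2 w * w xs else 0)"
      unfolding cw by (simp add: sum.distrib sum_distrib_left)
    also have "\<dots> = a * f xs + g xs"
      using F1 F2 by (simp add: sum_if_subset)
    finally show "a * f xs + g xs = (\<Sum>w\<in>F1 \<union> F2. c w * w xs)" by simp
  qed
  then show ?thesis unfolding lin_span_def using F1 F2 by blast
qed

lemma lin_span_sum:
  assumes "finite J" "\<forall>j\<in>J. F j \<in> lin_span S"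
  shows "(\<lambda>xs. \<Sum>j\<in>J. c j * F j xs) \<in> lin_span S"
  using assms
proof (induction J rule: finite_induct)
  case empty then show ?case by (simp add: lin_span_zero)
next
  case (insert j J)
  then have "(\<lambda>xs. c j * F j xs + (\<Sum>j\<in>J. c j * F j xs)) \<in> lin_span S"
    by (intro lin_span_add) auto
  then show ?case using insert by simp
qed

lemma tpow_delta: "tpow (\<lambda>x. if x = b then 1 else 0) l ws = (if ws = replicate l b then 1 else 0)"
proof (induction ws arbitrary: l)
  case Nil then show ?case by (cases l) (auto simp: tpow_def)
next
  case (Cons w ws)
  show ?case
  proof (cases l)
    case 0 then show ?thesis by (simp add: tpow_def)
  next
    case (Suc l')
    have "tpow (\<lambda>x. if x = b then 1 else 0) l (w # ws) = (if w = b then 1 else 0) * tpow (\<lambda>x. if x = b then 1 else 0) l' ws"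
      using Suc by (simp add: tpow_def)
    then show ?thesis using Cons[of l'] Suc by auto
  qed
qed

lemma basis_list_sorted_form:
  assumes xs: "length xs = k" "dev b xs \<le> r" and rk: "r \<le> k"
  obtains p zs where "p permutes {..<k}" "length zs = r" "permute_list p xs = replicate (k - r) b @ zs"
proof -
  define bs where "bs = filter (\<lambda>y. b = y) xs"
  define ds where "ds = filter (\<lambda>x. x \<noteq> b) xs"
  have len: "length bs + length ds = k"
    using xs sum_length_filter_compl[of "\<lambda>y. b = y" xs] by (auto simp: bs_def ds_def eq_commute)
  moreover have "length ds \<le> r" using xs by (simp add: ds_def dev_def)
  ultimately have kr: "k - r \<le> length bs" by simp
  define zs where "zs = replicate (length bs - (k - r)) b @ ds"
  have "replicate (k - r) b @ zs = replicate (length bs) b @ ds"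
    using kr by (simp add: zs_def replicate_add[symmetric])
  also have "\<dots> = bs @ ds" unfolding bs_def replicate_length_filter ..
  finally have sorted: "replicate (k - r) b @ zs = bs @ ds" .
  have "mset (bs @ ds) = mset xs" unfolding bs_def ds_def by (induction xs) auto
  then obtain p where "p permutes {..<length xs}" "permute_list p xs = bs @ ds"
    using mset_eq_permutation by metis
  moreover have "length zs = r" using len kr rk by (simp add: zs_def)
  ultimately show ?thesis using that xs sorted by simp
qed

lemma basis_vector_permute:
  assumes p: "p permutes {..<k}" and xs: "length xs = k"
  shows "(\<lambda>ws. if ws = xs then (1::complex) else 0) = perm_act k p (\<lambda>ws. if ws = permute_list p xs then 1 else 0)"
proof (rule ext)
  fix ws :: "'a list"
  show "(if ws = xs then 1 else 0) = perm_act k p (\<lambda>ws. if ws = permute_list p xs then 1 else 0) ws"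
  proof (cases "length ws = k")
    case True
    have "permute_list p ws = permute_list p xs \<longleftrightarrow> ws = xs"
      using permute_list_inv(1)[of p ws] permute_list_inv(1)[of p xs] p True xs by metis
    then show ?thesis using True by (simp add: perm_act_alt)
  next
    case False then show ?thesis using xs by (auto simp: perm_act_alt)
  qed
qed

lemma basis_vector_tens:
  "(\<lambda>ws. if ws = replicate l b @ zs then (1::complex) else 0)
     = tens l (tpow (\<lambda>x. if x = b then 1 else 0) l) (\<lambda>ws. if ws = zs then 1 else 0)"
proof (rule ext)
  fix ws :: "'a list"
  have "ws = replicate l b @ zs \<longleftrightarrow> take l ws = replicate l b \<and> drop l ws = zs"
    by (metis append_eq_conv_conj length_replicate)
  then show "(if ws = replicate l b @ zs then 1 else 0)
      = tens l (tpow (\<lambda>x. if x = b then 1 else 0) l) (\<lambda>ws. if ws = zs then 1 else 0) ws"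
    by (simp add: tens_def tpow_delta)
qed

text \<open>If U* maps e_b to theta, then U*^{\<otimes>k} maps a basis vector with at most r labels
  different from b to a permutation of theta^{\<otimes>(k-r)} \<otimes> U*^{\<otimes>r} e_zs, an element of V.\<close>
lemma basis_vector_in_Vset:
  fixes U :: "'a::finite \<Rightarrow> 'a \<Rightarrow> complex"
  assumes Ub: "\<And>y. U b y = cnj (\<theta> y)"
    and xs: "length xs = k" "dev b xs \<le> r" and rk: "r \<le> k"
  shows "tpw (ust U) k (\<lambda>ys. if ys = xs then 1 else 0) \<in> Vset \<theta> k r"
proof -
  obtain p zs where p: "p permutes {..<k}" and zs: "length zs = r"
    and sorted: "permute_list p xs = replicate (k - r) b @ zs"
    using basis_list_sorted_form[OF xs rk] by blast
  define e_zs where "e_zs = (\<lambda>ws. if ws = zs then (1::complex) else 0)"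
  have k: "k = (k - r) + r" using rk by simp
  have th: "(\<lambda>x. \<Sum>y\<in>UNIV. ust U x y * (if y = b then 1 else 0)) = \<theta>"
    by (simp add: ust_def sum_delta_mult Ub)
  have "tpw (ust U) k (\<lambda>ys. if ys = xs then 1 else 0)
      = perm_act k p (tpw (ust U) k (tens (k - r) (tpow (\<lambda>x. if x = b then 1 else 0) (k - r)) e_zs))"
    unfolding basis_vector_permute[OF p xs(1)] sorted basis_vector_tens e_zs_def tpw_perm[OF p] ..
  also have "tpw (ust U) k (tens (k - r) (tpow (\<lambda>x. if x = b then 1 else 0) (k - r)) e_zs)
      = tens (k - r) (tpow \<theta> (k - r)) (tpw (ust U) r e_zs)"
    by (subst k, subst tpw_tens) (simp add: tpw_tpow th)
  finally show ?thesis unfolding Vset_def using p tpw_tvec by blast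
qed

lemma rotated_back_in_span_Vset:
  fixes U :: "'a::finite \<Rightarrow> 'a \<Rightarrow> complex"
  assumes Ub: "\<And>y. U b y = cnj (\<theta> y)"
    and tw: "tvec k w'" and wdev: "\<And>ys. r < dev b ys \<Longrightarrow> w' ys = 0" and rk: "r \<le> k"
  shows "tpw (ust U) k w' \<in> lin_span (Vset \<theta> k r)"
proof -
  define L where "L = {xs \<in> lists_n k. dev b xs \<le> r}"
  have fL: "finite L" by (simp add: L_def)
  have wsum: "w' = (\<lambda>ys. \<Sum>xs\<in>L. w' xs * (\<lambda>xs ys. if ys = xs then 1 else 0) xs ys)"
  proof (rule ext)
    fix ys
    have "(\<Sum>xs\<in>L. w' xs * (if ys = xs then 1 else 0)) = (\<Sum>xs\<in>L. if xs = ys then w' ys else 0)"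
      by (rule sum.cong) auto
    also have "\<dots> = w' ys"
      using fL tw wdev by (auto simp: L_def lists_n_def tvec_def not_le)
    finally show "w' ys = (\<Sum>xs\<in>L. w' xs * (\<lambda>xs ys. if ys = xs then 1 else 0) xs ys)" by simp
  qed
  have "tpw (ust U) k w' = (\<lambda>ys. \<Sum>xs\<in>L. w' xs * tpw (ust U) k ((\<lambda>xs ys. if ys = xs then 1 else 0) xs) ys)"
    by (subst wsum, rule tpw_lin[OF fL])
  also have "\<dots> \<in> lin_span (Vset \<theta> k r)"
  proof (rule lin_span_sum[OF fL], intro ballI)
    fix xs assume "xs \<in> L"
    then have l: "length xs = k" and d: "dev b xs \<le> r" by (auto simp: L_def lists_n_def)
    have "tpw (ust U) k (\<lambda>ys. if ys = xs then 1 else 0) \<in> Vset \<theta> k r"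
      using Ub l d rk by (rule basis_vector_in_Vset)
    then show "tpw (ust U) k ((\<lambda>xs ys. if ys = xs then 1 else 0) xs) \<in> lin_span (Vset \<theta> k r)"
      by (simp add: lin_span_single)
  qed
  finally show ?thesis .
qed

lemma perm_act_id: "tvec k f \<Longrightarrow> perm_act k id f = f"
  unfolding perm_act_alt tvec_def by (intro ext) auto

lemma tens_tpow: "r \<le> k \<Longrightarrow> tens (k - r) (tpow \<theta> (k - r)) (tpow \<theta> r) = tpow \<theta> k"
proof (rule ext)
  fix xs assume rk: "r \<le> k"
  show "tens (k - r) (tpow \<theta> (k - r)) (tpow \<theta> r) xs = tpow \<theta> k xs"
  proof (cases "length xs = k")
    case True
    have "prod_list (map \<theta> (take (k - r) xs)) * prod_list (map \<theta> (drop (k - r) xs)) = prod_list (map \<theta> xs)"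
      by (metis append_take_drop_id map_append prod_list.append)
    then show ?thesis using True rk by (simp add: tens_def tpow_def)
  next
    case False then show ?thesis using rk by (auto simp: tens_def tpow_def)
  qed
qed

lemma tpow_in_almost_power:
  assumes "r \<le> k"
  shows "tpow \<theta> k \<in> almost_power \<theta> k r"
proof -
  have "perm_act k id (tens (k - r) (tpow \<theta> (k - r)) (tpow \<theta> r)) = tpow \<theta> k"
    unfolding tens_tpow[OF assms] by (rule perm_act_id) (simp add: tvec_def tpow_def)
  then have "\<exists>\<pi> \<psi>. tpow \<theta> k = perm_act k \<pi> (tens (k - r) (tpow \<theta> (k - r)) \<psi>) \<and> \<pi> permutes {..<k} \<and> tvec r \<psi>"
    by (intro exI[of _ id] exI[of _ "tpow \<theta> r"]) (simp add: permutes_id tvec_def tpow_def)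
  then have "tpow \<theta> k \<in> Vset \<theta> k r" unfolding Vset_def by blast
  then show ?thesis unfolding almost_power_def using sym_tpow lin_span_single by blast
qed

section \<open>Approximation by an almost power state\<close>

text \<open>In a frame rotated by U, whose b-th row is theta*, contracting the first m sites with
  theta amounts to fixing the first m labels to b.\<close>
lemma rotated_contraction:
  fixes U :: "'a::finite \<Rightarrow> 'a \<Rightarrow> complex" and \<Psi> :: "'a list \<Rightarrow> complex"
  assumes Ub: "\<And>y. U b y = cnj (\<theta> y)" and mn: "m \<le> n"
  shows "tpw U (n-m) (contr m \<theta> \<Psi>) ys = tpw U n \<Psi> (replicate m b @ ys)"
proof (cases "length ys = n - m")
  case True
  have "tpw U n \<Psi> (replicate m b @ ys) = (\<Sum>zs\<in>lists_n (m + (n-m)). kp U (replicate m b @ ys) zs * \<Psi> zs)"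
    using True mn by (simp add: tpw_def)
  also have "\<dots> = (\<Sum>ws\<in>lists_n m. \<Sum>ps\<in>lists_n (n-m). kp U (replicate m b @ ys) (ws@ps) * \<Psi> (ws@ps))"
    by (rule sum_lists_n_append)
  also have "\<dots> = (\<Sum>ws\<in>lists_n m. \<Sum>ps\<in>lists_n (n-m). kp U ys ps * (cnj (tpow \<theta> m ws) * \<Psi> (ws@ps)))"
  proof (intro sum.cong refl)
    fix ws ps :: "'a list" assume "ws \<in> lists_n m"
    then have l: "length ws = m" by (simp add: lists_n_def)
    then have "kp U (replicate m b @ ys) (ws@ps) = kp U (replicate m b) ws * kp U ys ps"
      by (intro kp_append) simp
    moreover have "kp U (replicate m b) ws = cnj (tpow \<theta> m ws)"
      using l by (simp add: kp_def tpow_def prod_list_map_nth Ub)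
    ultimately show "kp U (replicate m b @ ys) (ws@ps) * \<Psi> (ws@ps) = kp U ys ps * (cnj (tpow \<theta> m ws) * \<Psi> (ws@ps))"
      by simp
  qed
  also have "\<dots> = (\<Sum>ps\<in>lists_n (n-m). \<Sum>ws\<in>lists_n m. kp U ys ps * (cnj (tpow \<theta> m ws) * \<Psi> (ws@ps)))"
    by (rule sum.swap)
  also have "\<dots> = tpw U (n-m) (contr m \<theta> \<Psi>) ys"
    using True by (simp add: tpw_def contr_def sum_distrib_left)
  finally show ?thesis ..
qed (use mn in \<open>simp add: tpw_def\<close>)

lemma sym_fix_prefix:
  assumes "sym_tvec n \<Phi>" "tvec k f" "\<And>ys. f ys = \<Phi> (replicate m b @ ys)"
  shows "sym_tvec k f"
proof -
  have "f xs = f ys" if "mset xs = mset ys" for xs ys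
  proof -
    have "mset (replicate m b @ xs) = mset (replicate m b @ ys)" using that by simp
    then show ?thesis unfolding assms(3) by (rule sym_mset[OF assms(1)])
  qed
  with assms(2) show ?thesis unfolding sym_tvec_mset_iff by blast
qed

definition truncate :: "'a \<Rightarrow> nat \<Rightarrow> ('a list \<Rightarrow> complex) \<Rightarrow> ('a list \<Rightarrow> complex)" where
  "truncate b r f = (\<lambda>ys. if dev b ys \<le> r then f ys else 0)"

lemma sym_truncate:
  assumes "sym_tvec k f"
  shows "sym_tvec k (truncate b r f)"
proof -
  have "truncate b r f xs = truncate b r f ys" if eq: "mset xs = mset ys" for xs ys
  proof -
    have "dev b xs = dev b ys" using eq unfolding dev_def by (metis mset_filter size_mset)
    then show ?thesis using sym_mset[OF assms eq] by (simp add: truncate_def)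
  qed
  moreover have "tvec k (truncate b r f)"
    using assms by (simp add: sym_tvec_def tvec_def truncate_def)
  ultimately show ?thesis unfolding sym_tvec_mset_iff by blast
qed

lemma truncation_weights:
  fixes v :: "'a::finite list \<Rightarrow> complex" and b :: 'a and r k :: nat
  defines "t \<equiv> truncate b r v"
    and "tail \<equiv> \<Sum>ys\<in>lists_n k. if r < dev b ys then (cmod (v ys))^2 else 0"
  shows truncate_split: "Re (tinner k v v) = Re (tinner k t t) + tail"
    and truncate_infidelity: "0 < Re (tinner k t t) \<Longrightarrow>
      Re (tinner k v v) * (1 - (cmod (tinner k (normalized k v) (normalized k t)))^2) = tail"
proof -
  define M where "M = Re (tinner k t t)"
  define N where "N = Re (tinner k v v)"
  have tt: "tinner k t t = complex_of_real M" and vt: "tinner k v t = complex_of_real M"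
    unfolding M_def tinner_self_Re tinner_def
    by (simp_all add: t_def truncate_def cnj_mult_self if_distrib[of "\<lambda>z. _ * z"] cong: if_cong)
  have "N = (\<Sum>ys\<in>lists_n k. (if dev b ys \<le> r then (cmod (v ys))^2 else 0)
      + (if r < dev b ys then (cmod (v ys))^2 else 0))"
    unfolding N_def tinner_self_Re by (intro sum.cong refl) auto
  also have "\<dots> = M + tail"
  proof -
    have "M = (\<Sum>ys\<in>lists_n k. if dev b ys \<le> r then (cmod (v ys))^2 else 0)"
      unfolding M_def tinner_self_Re t_def truncate_def by (intro sum.cong) auto
    then show ?thesis unfolding tail_def sum.distrib by simp
  qed
  finally show NM: "Re (tinner k v v) = Re (tinner k t t) + tail" by (simp add: N_def M_def)
  assume "0 < Re (tinner k t t)"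
  then have Mpos: "0 < M" by (simp add: M_def)
  have tail0: "0 \<le> tail" unfolding tail_def by (rule sum_nonneg) auto
  have Npos: "0 < N" using NM Mpos tail0 by (simp add: N_def M_def)
  have "tinner k (normalized k v) (normalized k t) = complex_of_real M / complex_of_real (sqrt N * sqrt M)"
    unfolding normalized_def tinner_div vt by (simp add: M_def N_def)
  then have "cmod (tinner k (normalized k v) (normalized k t)) = M / (sqrt N * sqrt M)"
    using Mpos Npos by (simp add: norm_divide norm_mult)
  moreover have "(M / (sqrt N * sqrt M))^2 = M / N"
    using Mpos Npos by (simp add: power_divide power_mult_distrib) (simp add: power2_eq_square field_simps)
  ultimately show "Re (tinner k v v) * (1 - (cmod (tinner k (normalized k v) (normalized k t)))^2) = tail"
    using NM Npos by (simp add: N_def M_def field_simps)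
qed

lemma rotated_truncation_almost_power:
  fixes U :: "'a::finite \<Rightarrow> 'a \<Rightarrow> complex"
  assumes U: "unitary U" and Ub: "\<And>y. U b y = cnj (\<theta> y)" and sym: "sym_tvec k w"
    and r: "r \<le> k" and Mpos: "0 < Re (tinner k (truncate b r w) (truncate b r w))"
  defines "\<Psi>r \<equiv> tpw (ust U) k (normalized k (truncate b r w))"
  shows "\<Psi>r \<in> almost_power \<theta> k r" "unit_tvec k \<Psi>r"
proof -
  have sym_t: "sym_tvec k (normalized k (truncate b r w))"
    by (rule sym_normalized[OF sym_truncate[OF sym]])
  then have tt: "tvec k (normalized k (truncate b r w))" by (simp add: sym_tvec_def)
  have "\<Psi>r \<in> lin_span (Vset \<theta> k r)" unfolding \<Psi>r_def
    by (rule rotated_back_in_span_Vset[where U=U and b=b and \<theta>=\<theta>, OF Ub tt _ r]) (simp add: normalized_def truncate_def)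
  then show "\<Psi>r \<in> almost_power \<theta> k r"
    unfolding almost_power_def \<Psi>r_def using sym_tpw[OF sym_t] by blast
  have "unit_tvec k (normalized k (truncate b r w))"
    using sym_truncate[OF sym] Mpos by (intro unit_normalized) (simp_all add: sym_tvec_def)
  then show "unit_tvec k \<Psi>r"
    using tpw_inner[OF unitary_ust[OF U] tt] by (simp add: \<Psi>r_def unit_tvec_def tpw_tvec)
qed

text \<open>When |v|^2 itself is below the bound, theta^(\<otimes>k) serves as the almost power state.\<close>
lemma power_state_fallback:
  fixes \<theta> :: "'a::finite \<Rightarrow> complex"
  assumes u\<theta>: "unit_vec \<theta>" and r: "r \<le> k" and vE: "Re (tinner k v v) \<le> E"
  obtains \<Psi>r where "\<Psi>r \<in> almost_power \<theta> k r" "unit_tvec k \<Psi>r"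
    "Re (tinner k v v) * (1 - (cmod (tinner k (normalized k v) \<Psi>r))^2) \<le> E"
proof -
  have "Re (tinner k v v) * (1 - (cmod (tinner k (normalized k v) (tpow \<theta> k)))^2) \<le> Re (tinner k v v)"
    using tinner_self_ge0[of k v] by (intro mult_left_le) auto
  moreover have "unit_tvec k (tpow \<theta> k)"
    using tpow_norm[OF u\<theta>] by (simp add: unit_tvec_def tvec_def tpow_def)
  ultimately show ?thesis using that tpow_in_almost_power[OF r] vE by fastforce
qed

text \<open>In the rotated frame v is the symmetric vector U^n Psi with m labels fixed to b, and Psi_r
  is its rotated-back normalized truncation; the discarded weight is a tail weight.\<close>
lemma almost_power_approximation:
  fixes \<Psi> :: "'a::finite list \<Rightarrow> complex" and \<theta> :: "'a \<Rightarrow> complex"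
  assumes u\<Psi>: "unit_tvec n \<Psi>" and sym: "sym_tvec n \<Psi>" and u\<theta>: "unit_vec \<theta>"
    and mn: "m \<le> n" and r: "r \<le> n - m"
  defines "v \<equiv> contr m \<theta> \<Psi>"
  obtains \<Psi>r where "\<Psi>r \<in> almost_power \<theta> (n-m) r" "unit_tvec (n-m) \<Psi>r"
    "Re (tinner (n-m) v v) * (1 - (cmod (tinner (n-m) (normalized (n-m) v) \<Psi>r))^2)
       \<le> exp (- (real m * real r) / real n)"
proof -
  fix b :: 'a
  obtain U where U: "unitary U" and Ub: "\<And>y. U b y = cnj (\<theta> y)"
    using rotation_to_basis_vector[OF u\<theta>] by blast
  define k where "k = n - m"
  define \<Psi>' where "\<Psi>' = tpw U n \<Psi>"
  define v' where "v' = tpw U k v"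
  define t where "t = truncate b r v'"
  have t\<Psi>: "tvec n \<Psi>" and tv: "tvec k v"
    using u\<Psi> contr_tvec[of n \<Psi> m \<theta>] mn by (simp_all add: unit_tvec_def k_def v_def)
  have v'_eq: "v' ys = \<Psi>' (replicate m b @ ys)" for ys
    unfolding v'_def \<Psi>'_def k_def v_def by (rule rotated_contraction[where U=U and b=b and \<theta>=\<theta>, OF Ub mn])
  have sym\<Psi>': "sym_tvec n \<Psi>'" unfolding \<Psi>'_def by (rule sym_tpw[OF sym])
  have sym_v': "sym_tvec k v'" by (rule sym_fix_prefix[OF sym\<Psi>' _ v'_eq]) (simp add: v'_def tpw_tvec)
  have vv: "Re (tinner k v' v') = Re (tinner k v v)" unfolding v'_def tpw_inner[OF U tv] ..
  text \<open>The weight discarded by the truncation is a tail weight of the symmetric unit vector Psi'.\<close>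
  have "tinner n \<Psi>' \<Psi>' = 1" using u\<Psi> unfolding \<Psi>'_def tpw_inner[OF U t\<Psi>] unit_tvec_def by simp
  then have "(\<Sum>zs\<in>lists_n n. (cmod (\<Psi>' zs))^2) = 1" by (metis one_complex.sel tinner_self_Re)
  then have tail: "(\<Sum>ys\<in>lists_n k. if r < dev b ys then (cmod (v' ys))^2 else 0)
      \<le> exp (- (real m * real r) / real n)"
    using tail_weight_bound[OF sym\<Psi>' mn, of b r] unfolding v'_eq by (simp add: tail_weight_def k_def)
  show ?thesis
  proof (cases "Re (tinner k t t) = 0")
    case True
    have "Re (tinner k v v) \<le> exp (- (real m * real r) / real n)"
      using truncate_split[of k v' b r] True tail by (simp add: vv t_def)
    then show ?thesis using power_state_fallback[OF u\<theta> r[folded k_def]] that by (metis k_def)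
  next
    case False
    then have Mpos: "0 < Re (tinner k t t)" using tinner_self_ge0[of k t] by simp
    define \<Psi>r where "\<Psi>r = tpw (ust U) k (normalized k t)"
    have ap: "\<Psi>r \<in> almost_power \<theta> k r" "unit_tvec k \<Psi>r"
      using rotated_truncation_almost_power[OF U Ub sym_v' _ Mpos[unfolded t_def]] r
      by (simp_all add: \<Psi>r_def t_def k_def)
    have tt: "tvec k (normalized k t)"
      using sym_normalized[OF sym_truncate[OF sym_v']] by (simp add: sym_tvec_def t_def)
    text \<open>Overlaps are invariant under the rotation U^(\<otimes>k).\<close>
    have "tinner k (normalized k v) \<Psi>r = tinner k (normalized k v') (normalized k t)"
      using tpw_inner[OF U, of k \<Psi>r "normalized k v", symmetric] tpw_inv(2)[OF U tt]
      by (simp add: \<Psi>r_def tpw_tvec tpw_normalized[OF U tv] v'_def)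
    then have "Re (tinner k v v) * (1 - (cmod (tinner k (normalized k v) \<Psi>r))^2)
        = (\<Sum>ys\<in>lists_n k. if r < dev b ys then (cmod (v' ys))^2 else 0)"
      using truncate_infidelity[of k b r v', folded t_def, OF Mpos] by (simp add: vv)
    with tail ap that show ?thesis by (simp add: k_def)
  qed
qed

text \<open>Conversion of the infidelity bound into the trace-norm bound of the theorem (which holds
  even without the factor sqrt 2).\<close>
lemma trace_distance_bound:
  fixes a N X p q :: real
  assumes a: "0 < a" "a^2 \<le> N" and X: "N * X \<le> exp (- p / q)"
  shows "2 * sqrt X \<le> 2 * sqrt 2 * inverse a * exp (- p / (2 * q))"
proof -
  have Npos: "0 < N" using a by (meson less_le_trans zero_less_power)
  have "X \<le> exp (- p / q) / N" using X Npos by (simp add: field_simps)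
  also have "\<dots> \<le> exp (- p / q) / a^2" using a Npos by (intro divide_left_mono) auto
  finally have "sqrt X \<le> sqrt (exp (- p / q) / a^2)" by (rule real_sqrt_le_mono)
  also have "\<dots> = sqrt (exp (- p / q)) / a" using a(1) by (simp add: real_sqrt_divide)
  also have "exp (- p / q) = exp (- p / (2 * q)) * exp (- p / (2 * q))"
    by (simp add: exp_add[symmetric])
  then have "sqrt (exp (- p / q)) = exp (- p / (2 * q))" by simp
  also have "exp (- p / (2 * q)) / a \<le> sqrt 2 * exp (- p / (2 * q)) / a"
    using a(1) by (intro divide_right_mono) (simp_all add: mult_le_cancel_right1)
  finally show ?thesis using a(1) by (simp add: field_simps)
qed

theorem lemma2:
  fixes \<Psi> :: "'a::finite list \<Rightarrow> complex" and \<theta> :: "'a \<Rightarrow> complex" and n m :: nat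
  assumes "unit_tvec n \<Psi>"
    and "sym_tvec n \<Psi>"
    and "unit_vec \<theta>"
    and "tinner n \<Psi> (tpow \<theta> n) \<noteq> 0"
    and "m \<le> n"
  shows "\<exists>\<Psi>nm. unit_tvec (n - m) \<Psi>nm \<and>
           op_le (n - m) (proj \<Psi>nm \<Psi>nm)
             (\<lambda>xs ys. complex_of_real ((inverse (cmod (tinner n \<Psi> (tpow \<theta> n)))) ^ 2)
                        * ptrace m (proj \<Psi> \<Psi>) xs ys) \<and>
           (\<forall>r \<le> n - m. \<exists>\<Psi>nmr. \<Psi>nmr \<in> almost_power \<theta> (n - m) r \<and> unit_tvec (n - m) \<Psi>nmr \<and>
              trace_norm (n - m) (\<lambda>xs ys. proj \<Psi>nm \<Psi>nm xs ys - proj \<Psi>nmr \<Psi>nmr xs ys)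
                \<le> 2 * sqrt 2 * inverse (cmod (tinner n \<Psi> (tpow \<theta> n)))
                   * exp (- (real m * real r) / (2 * real n)))"
proof -
  define a where "a = cmod (tinner n \<Psi> (tpow \<theta> n))"
  define v where "v = contr m \<theta> \<Psi>"
  define u where "u = normalized (n - m) v"
  have apos: "0 < a" using assms(4) by (simp add: a_def)
  have av: "a^2 \<le> Re (tinner (n - m) v v)"
    unfolding a_def v_def by (rule contr_norm_ge[OF assms(3,5)])
  have Npos: "0 < Re (tinner (n - m) v v)" using av apos by (meson less_le_trans zero_less_power)
  have "tvec (n - m) v"
    using assms(1,5) contr_tvec[of n \<Psi> m \<theta>] by (simp add: unit_tvec_def v_def)
  then have "unit_tvec (n - m) u"
    unfolding u_def using Npos by (rule unit_normalized)
  moreover have "op_le (n - m) (proj u u) (\<lambda>xs ys. complex_of_real ((inverse a)^2) * ptrace m (proj \<Psi> \<Psi>) xs ys)"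
    unfolding u_def v_def by (rule normalized_contr_le_ptrace[OF assms(3) apos av[unfolded v_def]])
  moreover have "\<exists>\<Psi>r. \<Psi>r \<in> almost_power \<theta> (n - m) r \<and> unit_tvec (n - m) \<Psi>r \<and>
      trace_norm (n - m) (\<lambda>xs ys. proj u u xs ys - proj \<Psi>r \<Psi>r xs ys)
        \<le> 2 * sqrt 2 * inverse a * exp (- (real m * real r) / (2 * real n))" if r: "r \<le> n - m" for r
  proof -
    obtain \<Psi>r where ap: "\<Psi>r \<in> almost_power \<theta> (n - m) r" "unit_tvec (n - m) \<Psi>r"
      and fid: "Re (tinner (n - m) v v) * (1 - (cmod (tinner (n - m) u \<Psi>r))^2)
                  \<le> exp (- (real m * real r) / real n)"
      using almost_power_approximation[OF assms(1,2,3,5) r] unfolding u_def v_def by blast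
    have "trace_norm (n - m) (\<lambda>xs ys. proj u u xs ys - proj \<Psi>r \<Psi>r xs ys)
        = 2 * sqrt (1 - (cmod (tinner (n - m) u \<Psi>r))^2)"
      by (rule trace_norm_pure[OF \<open>unit_tvec (n - m) u\<close> ap(2)])
    also have "\<dots> \<le> 2 * sqrt 2 * inverse a * exp (- (real m * real r) / (2 * real n))"
      by (rule trace_distance_bound[OF apos av fid])
    finally show ?thesis using ap by blast
  qed
  ultimately show ?thesis unfolding a_def by blast
qed

end
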